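(* Let $n$ be a positive integer, $G=\mathbb{Z}\times\mathbb{Z}_n=\langle z\rangle\times\langle a\rangle$, and let $\mathcal{S}$ be a Schur ring over $G$. Let $H$ be the maximal $\mathcal{S}$-subgroup of $G$ contained in $\mathbb{Z}$. Suppose $n\mid[\mathbb{Z}:H]$, and let $K$ be the unique subgroup of $\mathbb{Z}$ with $[K:H]=n$ (if $[\mathbb{Z}:H]=\infty$, i.e. $H=1$, set $K=1$). Then every $\mathcal{S}$-class contained in $G\setminus(K\times\mathbb{Z}_n)$ is a union of cosets of some nontrivial $\mathcal{S}$-subgroup of $\mathbb{Z}_n$.
   Context: $F$ is a field of characteristic $0$; $\mathbb{Z}=\langle z\rangle$ is infinite cyclic and $\mathbb{Z}_n=\langle a\rangle$ is cyclic of order $n$, written multiplicatively. For finite $C\subseteq G$, $\overline{C}=\sum_{g\in C}g\in F[G]$ and $C^*=\{g^{-1}:g\in C\}$. A Schur ring over $G$ is a subspace $\mathcal{S}=\mathrm{Span}_F\{\overline{C}:C\in\mathcal{D}\}$ of $F[G]$, where $\mathcal{D}=\mathcal{D}(\mathcal{S})$ is a partition of $G$ into finite subsets with $\{1\}\in\mathcal{D}$, $C\in\mathcal{D}\Rightarrow C^*\in\mathcal{D}$, and each product $\overline{C}\,\overline{D}$ ($C,D\in\mathcal{D}$) a finite $F$-linear combination of the $\overline{E}$, $E\in\mathcal{D}$. Members of $\mathcal{D}(\mathcal{S})$ are $\mathcal{S}$-classes; an $\mathcal{S}$-subset is a union of $\mathcal{S}$-classes; an $\mathcal{S}$-subgroup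 is a subgroup which is an $\mathcal{S}$-subset (the $\mathcal{S}$-subgroups contained in $\mathbb{Z}$ have a unique maximal element). *)

theory Defs
  imports Main
begin

text \<open>The group G = Z x Z_n, written additively on pairs (k, j) with k :: int and
  j \<in> {0..<n}; (k,j) stands for z^k a^j.\<close>

definition grp :: "nat \<Rightarrow> (int \<times> int) set" where
  "grp n = UNIV \<times> {0..<int n}"

definition gmul :: "nat \<Rightarrow> int \<times> int \<Rightarrow> int \<times> int \<Rightarrow> int \<times> int" where
  "gmul n x y = (fst x + fst y, (snd x + snd y) mod int n)"

definition ginv :: "nat \<Rightarrow> int \<times> int \<Rightarrow> int \<times> int" where
  "ginv n x = (- fst x, (- snd x) mod int n)"

definition gone :: "int \<times> int" where
  "gone = (0, 0)"

definition Zpart :: "(int \<times> int) set" where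
  "Zpart = {(k, 0) | k. True}"

definition Znpart :: "nat \<Rightarrow> (int \<times> int) set" where
  "Znpart n = {0} \<times> {0..<int n}"

text \<open>Elements of the group algebra F[G]: finitely supported functions G -> F
  (identified with functions on int x int vanishing outside G).
  The class sum of a finite set C.\<close>
definition csum :: "'f::field_char_0 itself \<Rightarrow> (int \<times> int) set \<Rightarrow> (int \<times> int \<Rightarrow> 'f)" where
  "csum _ C = (\<lambda>g. if g \<in> C then 1 else 0)"

definition gconv :: "nat \<Rightarrow> (int \<times> int \<Rightarrow> 'f::field_char_0) \<Rightarrow> (int \<times> int \<Rightarrow> 'f) \<Rightarrow> (int \<times> int \<Rightarrow> 'f)" where
  "gconv n f h = (\<lambda>g. \<Sum>p \<in> {(u, v). u \<in> grp n \<and> v \<in> grp n \<and> f u \<noteq> 0 \<and> h v \<noteq> 0 \<and> gmul n u v = g}.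
                        f (fst p) * h (snd p))"

text \<open>Schur ring over G with coefficients in the field 'f (of characteristic 0),
  given by its partition D of G into the S-classes.\<close>
definition schur_ring :: "'f::field_char_0 itself \<Rightarrow> nat \<Rightarrow> (int \<times> int) set set \<Rightarrow> bool" where
  "schur_ring F n D \<longleftrightarrow>
     \<Union> D = grp n \<and>
     (\<forall>C\<in>D. C \<noteq> {} \<and> finite C) \<and>
     (\<forall>C\<in>D. \<forall>C'\<in>D. C \<noteq> C' \<longrightarrow> C \<inter> C' = {}) \<and>
     {gone} \<in> D \<and>
     (\<forall>C\<in>D. ginv n ` C \<in> D) \<and>
     (\<forall>C\<in>D. \<forall>C'\<in>D. \<exists>T c. finite T \<and> T \<subseteq> D \<and>
        gconv n (csum F C) (csum F C') = (\<lambda>g. \<Sum>E\<in>T. (c E :: 'f) * csum F E g))"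

definition subgrp :: "nat \<Rightarrow> (int \<times> int) set \<Rightarrow> bool" where
  "subgrp n H \<longleftrightarrow> H \<subseteq> grp n \<and> gone \<in> H \<and>
     (\<forall>x\<in>H. \<forall>y\<in>H. gmul n x y \<in> H) \<and> (\<forall>x\<in>H. ginv n x \<in> H)"

definition S_subset :: "(int \<times> int) set set \<Rightarrow> (int \<times> int) set \<Rightarrow> bool" where
  "S_subset D X \<longleftrightarrow> (\<exists>T \<subseteq> D. X = \<Union> T)"

definition S_subgroup :: "nat \<Rightarrow> (int \<times> int) set set \<Rightarrow> (int \<times> int) set \<Rightarrow> bool" where
  "S_subgroup n D H \<longleftrightarrow> subgrp n H \<and> S_subset D H"

end

theory Submission
  imports Defs "HOL-Computational_Algebra.Primes"
begin

section \<open>Necklaces\<close>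

lemma rotate_rotate_inverse: "rotate ((length xs - 1) * i) (rotate i xs) = xs"
proof (cases xs)
  case (Cons a ys)
  then have "(length xs - 1) * i + i = length xs * i" by simp
  then show ?thesis by (simp add: rotate_rotate)
qed simp

lemma rotate_eq_rotate_iff: "rotate i xs = rotate i ys \<longleftrightarrow> xs = ys"
  by (metis length_rotate rotate_rotate_inverse)

lemma rotate1_eq_self_imp_replicate:
  assumes "rotate1 xs = xs"
  shows "xs = replicate (length xs) (hd xs)"
proof -
  have "xs ! i = hd xs" if "i < length xs" for i
    using that
  proof (induction i)
    case 0
    then show ?case by (simp add: hd_conv_nth)
  next
    case (Suc i)
    have "xs ! Suc i = rotate1 xs ! i"
      using Suc.prems by (simp add: nth_rotate1)
    then show ?case using Suc assms by simp
  qed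
  then show ?thesis by (simp add: list_eq_iff_nth_eq)
qed

lemma rotate_eq_self_imp_rotate1_eq_self:
  assumes p: "prime (length xs)" and rot: "rotate d xs = xs" and ndvd: "\<not> length xs dvd d"
  shows "rotate1 xs = xs"
proof -
  let ?p = "length xs"
  have "coprime d ?p"
    using prime_imp_coprime[OF p ndvd] by (simp add: coprime_commute)
  moreover have "d \<noteq> 0" using ndvd by (metis dvd_0_right)
  ultimately obtain a b where ab: "d * a = ?p * b + 1"
    using bezout_nat[of d ?p] by auto
  have "rotate (d * k) xs = xs" for k
    by (induction k) (simp_all add: rot rotate_rotate[symmetric])
  then have "rotate (?p * b + 1) xs = xs" by (metis ab)
  moreover have "(?p * b + 1) mod ?p = 1"
    using prime_gt_1_nat[OF p] by (simp add: mod_Suc)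
  ultimately show ?thesis
    by (metis One_nat_def rotate_Suc rotate_conv_mod rotate0 id_apply)
qed

lemma card_rotations_prime:
  assumes p: "prime (length xs)" and nfix: "rotate1 xs \<noteq> xs"
  shows "card (range (\<lambda>i. rotate i xs)) = length xs"
proof -
  let ?p = "length xs"
  have "range (\<lambda>i. rotate i xs) = (\<lambda>i. rotate i xs) ` {..<?p}"
    using prime_gt_0_nat[OF p] by (auto simp: image_iff intro: rotate_conv_mod)
  moreover have "inj_on (\<lambda>i. rotate i xs) {..<?p}"
  proof (rule linorder_inj_onI')
    fix i j assume ij: "i \<in> {..<?p}" "j \<in> {..<?p}" "i < j"
    show "rotate i xs \<noteq> rotate j xs"
    proof
      assume eq: "rotate i xs = rotate j xs"
      have "rotate (j - i) (rotate i xs) = rotate j xs"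
        using ij by (simp add: rotate_rotate)
      then have "rotate (j - i) (rotate i xs) = rotate i xs"
        using eq by simp
      moreover have "\<not> ?p dvd j - i" using ij by (auto dest: dvd_imp_le)
      ultimately have "rotate1 (rotate i xs) = rotate i xs"
        using p by (intro rotate_eq_self_imp_rotate1_eq_self) simp_all
      then show False
        using nfix by (simp add: rotate1_rotate_swap rotate_eq_rotate_iff)
    qed
  qed
  ultimately show ?thesis by (simp add: card_image)
qed

text \<open>Rotation of length-\<open>p\<close> lists partitions the non-constant ones into orbits of size \<open>p\<close>.\<close>

lemma prime_dvd_card_rotate1_non_fixed:
  assumes fin: "finite A" and p: "prime p"
    and len: "\<And>xs. xs \<in> A \<Longrightarrow> length xs = p" and closed: "\<And>xs. xs \<in> A \<Longrightarrow> rotate1 xs \<in> A"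
  shows "p dvd card {xs\<in>A. rotate1 xs \<noteq> xs}"
proof -
  define B where "B = {xs\<in>A. rotate1 xs \<noteq> xs}"
  define r where "r = {(xs, ys). xs \<in> B \<and> ys \<in> range (\<lambda>i. rotate i xs)}"
  have rotate_in_A: "rotate i xs \<in> A" if "xs \<in> A" for i xs
    using that by (induction i) (simp_all add: closed)
  have rotate_in_B: "range (\<lambda>i. rotate i xs) \<subseteq> B" if "xs \<in> B" for xs
    using that rotate_in_A by (auto simp: B_def rotate1_rotate_swap rotate_eq_rotate_iff)
  have "equiv B r"
  proof (rule equivI)
    show "r \<subseteq> B \<times> B"
      unfolding r_def using rotate_in_B by auto
    show "refl_on B r"
      unfolding refl_on_def r_def using rotate_in_B by (fastforce intro: range_eqI[of _ _ 0])
    show "sym r"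
    proof (rule symI)
      fix xs ys assume "(xs, ys) \<in> r"
      then obtain i where "xs \<in> B" "ys = rotate i xs" by (auto simp: r_def)
      then show "(ys, xs) \<in> r"
        using rotate_in_B by (auto simp: r_def intro!: range_eqI rotate_rotate_inverse[symmetric])
    qed
    show "trans r"
      unfolding r_def by (rule transI) (auto simp: rotate_rotate)
  qed
  moreover have "p dvd card X" if "X \<in> B // r" for X
  proof -
    obtain xs where xs: "xs \<in> B" "X = r `` {xs}" using \<open>X \<in> B // r\<close> by (auto elim: quotientE)
    then have "X = range (\<lambda>i. rotate i xs)" by (auto simp: r_def)
    then show ?thesis
      using xs card_rotations_prime[of xs] len p by (simp add: B_def)
  qed
  ultimately show ?thesis
    using fin by (simp add: B_def equiv_imp_dvd_card)
qed

lemma mem_grp_iff: "x \<in> grp n \<longleftrightarrow> 0 \<le> snd x \<and> snd x < int n"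
  by (cases x) (auto simp: grp_def)

lemma gmul_in_grp: "n \<ge> 1 \<Longrightarrow> gmul n x y \<in> grp n"
  by (simp add: mem_grp_iff gmul_def)

lemma ginv_in_grp: "n \<ge> 1 \<Longrightarrow> ginv n x \<in> grp n"
  by (simp add: mem_grp_iff ginv_def)

lemma gone_in_grp: "n \<ge> 1 \<Longrightarrow> gone \<in> grp n"
  by (simp add: mem_grp_iff gone_def)

lemma gmul_assoc: "gmul n (gmul n x y) z = gmul n x (gmul n y z)"
  by (simp add: gmul_def mod_add_eq mod_add_left_eq mod_add_right_eq add.assoc)

lemma gmul_commute: "gmul n x y = gmul n y x"
  by (simp add: gmul_def add.commute)

lemma gmul_gone_left: "x \<in> grp n \<Longrightarrow> gmul n gone x = x"
  by (cases x) (simp add: mem_grp_iff gmul_def gone_def)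

lemma gmul_gone_right: "x \<in> grp n \<Longrightarrow> gmul n x gone = x"
  by (simp add: gmul_commute gmul_gone_left)

lemma gmul_ginv_right: "gmul n x (ginv n x) = gone"
  by (simp add: gmul_def ginv_def gone_def mod_add_right_eq)

lemma gmul_ginv_left: "gmul n (ginv n x) x = gone"
  by (simp add: gmul_commute gmul_ginv_right)

lemma ginv_ginv: "x \<in> grp n \<Longrightarrow> ginv n (ginv n x) = x"
  by (cases x) (simp add: mem_grp_iff ginv_def mod_minus_eq)

lemma ginv_gmul: "ginv n (gmul n x y) = gmul n (ginv n x) (ginv n y)"
  by (simp add: ginv_def gmul_def mod_minus_eq mod_add_eq)

definition gpow :: "nat \<Rightarrow> nat \<Rightarrow> int \<times> int \<Rightarrow> int \<times> int" where
  "gpow n r x = (int r * fst x, (int r * snd x) mod int n)"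

lemma gpow_in_grp: "n \<ge> 1 \<Longrightarrow> gpow n r x \<in> grp n"
  by (simp add: mem_grp_iff gpow_def)

lemma gpow_mult: "gpow n (a * b) x = gpow n a (gpow n b x)"
  by (simp add: gpow_def mod_mult_right_eq mult.assoc)

lemma gpow_1: "x \<in> grp n \<Longrightarrow> gpow n 1 x = x"
  by (cases x) (simp add: mem_grp_iff gpow_def)

lemma inj_on_gpow:
  assumes "coprime r n" "r \<ge> 1"
  shows "inj_on (gpow n r) (grp n)"
proof (rule inj_onI)
  fix x y assume xy: "x \<in> grp n" "y \<in> grp n" "gpow n r x = gpow n r y"
  then have "fst x = fst y" using assms(2) by (simp add: gpow_def)
  have "int n dvd int r * (snd x - snd y)"
    using xy(3) by (simp add: gpow_def mod_eq_dvd_iff right_diff_distrib)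
  moreover have "coprime (int n) (int r)" using assms(1) by (simp add: coprime_commute)
  ultimately have "snd x mod int n = snd y mod int n"
    by (simp add: coprime_dvd_mult_right_iff mod_eq_dvd_iff)
  with xy(1,2) have "snd x = snd y" by (simp add: mem_grp_iff)
  with \<open>fst x = fst y\<close> show "x = y" by (simp add: prod_eq_iff)
qed

definition lprod :: "nat \<Rightarrow> (int \<times> int) list \<Rightarrow> int \<times> int" where
  "lprod n xs = (sum_list (map fst xs), sum_list (map snd xs) mod int n)"

lemma lprod_Nil: "lprod n [] = gone"
  by (simp add: lprod_def gone_def)

lemma lprod_Cons: "lprod n (x # xs) = gmul n x (lprod n xs)"
  by (simp add: lprod_def gmul_def mod_add_right_eq)

lemma lprod_append: "lprod n (xs @ ys) = gmul n (lprod n xs) (lprod n ys)"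
  by (simp add: lprod_def gmul_def mod_add_eq)

lemma lprod_singleton: "x \<in> grp n \<Longrightarrow> lprod n [x] = x"
  by (cases x) (simp add: lprod_def mem_grp_iff)

lemma lprod_rotate1: "lprod n (rotate1 xs) = lprod n xs"
  by (cases xs) (simp_all add: lprod_def algebra_simps)

lemma lprod_replicate: "lprod n (replicate p x) = gpow n p x"
  by (simp add: lprod_def gpow_def sum_list_replicate)

lemma lprod_map_ginv: "lprod n (map (ginv n) xs) = ginv n (lprod n xs)"
  by (induction xs) (simp_all add: lprod_Nil lprod_Cons ginv_gmul, simp add: ginv_def gone_def)

lemma lprod_in_grp: "n \<ge> 1 \<Longrightarrow> lprod n xs \<in> grp n"
  by (simp add: mem_grp_iff lprod_def)

text \<open>\<open>prod_count n X k g\<close> is the coefficient of \<open>g\<close> in \<open>(\<Sum>X)\<^sup>k\<close>, and \<open>prod_set n X k\<close>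
  is its support, the product set \<open>X\<^sup>k\<close>.\<close>

definition prod_count :: "nat \<Rightarrow> (int \<times> int) set \<Rightarrow> nat \<Rightarrow> int \<times> int \<Rightarrow> nat" where
  "prod_count n X k g = card {xs. set xs \<subseteq> X \<and> length xs = k \<and> lprod n xs = g}"

definition prod_set :: "nat \<Rightarrow> (int \<times> int) set \<Rightarrow> nat \<Rightarrow> (int \<times> int) set" where
  "prod_set n X k = lprod n ` {xs. set xs \<subseteq> X \<and> length xs = k}"

lemma finite_prod_set: "finite X \<Longrightarrow> finite (prod_set n X k)"
  by (simp add: prod_set_def finite_lists_length_eq)

lemma prod_count_0: "prod_count n X 0 g = (if g = gone then 1 else 0)"
proof -
  have "{xs. set xs \<subseteq> X \<and> length xs = 0 \<and> lprod n xs = g} = (if g = gone then {[]} else {})"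
    by (auto simp: lprod_Nil)
  then show ?thesis by (simp add: prod_count_def)
qed

lemma prod_count_Suc:
  assumes "finite X"
  shows "prod_count n X (Suc k) g =
    (\<Sum>x\<in>X. \<Sum>u\<in>prod_set n X k. if gmul n x u = g then prod_count n X k u else 0)"
proof -
  define L where "L k = {xs. set xs \<subseteq> X \<and> length xs = k}" for k
  have fin: "finite (L k)" for k
    unfolding L_def using assms by (rule finite_lists_length_eq)
  have count_card: "prod_count n X k u = card {ys\<in>L k. lprod n ys = u}" for k u
    unfolding prod_count_def L_def by (rule arg_cong[where f = card]) auto
  have count: "prod_count n X k u = (\<Sum>ys\<in>L k. if lprod n ys = u then 1 else 0)" for k u
    by (simp add: count_card sum.inter_filter[OF fin, symmetric])
  have L_Suc: "L (Suc k) = (\<lambda>(ys, x). x # ys) ` (L k \<times> X)"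
    unfolding L_def by (rule lists_length_Suc_eq)
  have inj: "inj_on (\<lambda>(ys, x). x # ys) (L k \<times> X)"
    by (auto simp: inj_on_def)
  have "prod_count n X (Suc k) g = (\<Sum>xs\<in>L (Suc k). if lprod n xs = g then 1 else 0)"
    by (rule count)
  also have "\<dots> = (\<Sum>(ys, x)\<in>L k \<times> X. if gmul n x (lprod n ys) = g then 1 else 0)"
    unfolding L_Suc by (subst sum.reindex[OF inj]) (simp add: case_prod_unfold lprod_Cons)
  also have "\<dots> = (\<Sum>x\<in>X. \<Sum>ys\<in>L k. if gmul n x (lprod n ys) = g then 1 else 0)"
    by (simp add: sum.cartesian_product[symmetric] sum.swap[of _ "L k"])
  also have "\<dots> = (\<Sum>x\<in>X. \<Sum>u\<in>prod_set n X k. if gmul n x u = g then prod_count n X k u else 0)"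
  proof (rule sum.cong[OF refl])
    fix x
    have "(\<Sum>ys\<in>L k. if gmul n x (lprod n ys) = g then 1 else 0) =
        (\<Sum>u\<in>prod_set n X k. \<Sum>ys\<in>{ys\<in>L k. lprod n ys = u}. if gmul n x u = g then 1 else 0)"
      unfolding prod_set_def L_def[symmetric] by (subst sum.image_gen[OF fin]) (auto intro!: sum.cong)
    also have "\<dots> = (\<Sum>u\<in>prod_set n X k. if gmul n x u = g then prod_count n X k u else 0)"
      by (auto simp: count_card intro!: sum.cong)
    finally show "(\<Sum>ys\<in>L k. if gmul n x (lprod n ys) = g then 1 else 0) =
        (\<Sum>u\<in>prod_set n X k. if gmul n x u = g then prod_count n X k u else 0)" .
  qed
  finally show ?thesis .
qed

lemma prod_set_eq_support:
  assumes "finite X" "n \<ge> 1"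
  shows "prod_set n X k = {g \<in> grp n. prod_count n X k g \<noteq> 0}"
proof -
  have "finite {xs. set xs \<subseteq> X \<and> length xs = k \<and> lprod n xs = g}" for g
    by (rule finite_subset[OF _ finite_lists_length_eq[OF assms(1), of k]]) auto
  then have "g \<in> prod_set n X k \<longleftrightarrow> prod_count n X k g \<noteq> 0" for g
    unfolding prod_set_def prod_count_def by (subst card_0_eq) blast+
  then show ?thesis
    using assms(2) by (auto simp: prod_set_def lprod_in_grp)
qed

text \<open>The necklace argument gives \<open>(\<Sum>X)\<^sup>p \<equiv> \<Sum>X\<^sup>(\<^sup>p\<^sup>)\<close> modulo \<open>p\<close>.\<close>

lemma prod_count_prime_mod:
  assumes fin: "finite X" and p: "prime p"
  shows "prod_count n X p g mod p = card {x\<in>X. gpow n p x = g} mod p"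
proof -
  define A where "A = {xs. set xs \<subseteq> X \<and> length xs = p \<and> lprod n xs = g}"
  have finA: "finite A"
    unfolding A_def by (rule finite_subset[OF _ finite_lists_length_eq[OF fin, of p]]) auto
  have fixed: "{xs\<in>A. rotate1 xs = xs} = (\<lambda>x. replicate p x) ` {x\<in>X. gpow n p x = g}"
  proof (intro set_eqI iffI)
    fix xs assume xs: "xs \<in> {xs\<in>A. rotate1 xs = xs}"
    then have A: "set xs \<subseteq> X" "length xs = p" "lprod n xs = g" and "rotate1 xs = xs"
      by (simp_all add: A_def)
    then have rep: "xs = replicate p (hd xs)"
      using rotate1_eq_self_imp_replicate by metis
    have "xs \<noteq> []" using A(2) p by auto
    then have "hd xs \<in> X" using A(1) hd_in_set by blast
    moreover have "gpow n p (hd xs) = g"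
      using A(3) rep lprod_replicate by metis
    ultimately show "xs \<in> (\<lambda>x. replicate p x) ` {x\<in>X. gpow n p x = g}"
      using rep by blast
  next
    fix xs assume "xs \<in> (\<lambda>x. replicate p x) ` {x\<in>X. gpow n p x = g}"
    then obtain x where "x \<in> X" "gpow n p x = g" "xs = replicate p x" by blast
    then show "xs \<in> {xs\<in>A. rotate1 xs = xs}"
      by (simp add: A_def lprod_replicate set_replicate_conv_if)
  qed
  have "card {x\<in>X. gpow n p x = g} = card {xs\<in>A. rotate1 xs = xs}"
    unfolding fixed using prime_gt_0_nat[OF p] by (simp add: card_image inj_on_def)
  moreover obtain c where "card {xs\<in>A. rotate1 xs \<noteq> xs} = p * c"
    using prime_dvd_card_rotate1_non_fixed[OF finA p] by (auto simp: A_def lprod_rotate1)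
  moreover have "card A = card {xs\<in>A. rotate1 xs = xs} + card {xs\<in>A. rotate1 xs \<noteq> xs}"
    using card_Int_Diff[OF finA, of "{xs. rotate1 xs = xs}"] by (simp add: Int_def set_diff_eq)
  moreover have "prod_count n X p g = card A"
    by (simp add: A_def prod_count_def)
  ultimately show ?thesis
    by simp
qed

section \<open>Schur rings over \<open>\<int> \<times> \<int>\<^sub>n\<close>\<close>

definition class_fun :: "(int \<times> int) set set \<Rightarrow> (int \<times> int \<Rightarrow> 'b) \<Rightarrow> bool" where
  "class_fun D f \<longleftrightarrow> (\<forall>C\<in>D. \<forall>x\<in>C. \<forall>y\<in>C. f x = f y)"

lemma class_fun_sum:
  assumes "\<And>i. i \<in> I \<Longrightarrow> class_fun D (f i)"
  shows "class_fun D (\<lambda>g. \<Sum>i\<in>I. f i g)"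
  unfolding class_fun_def
proof (intro ballI)
  fix C x y assume "C \<in> D" "x \<in> C" "y \<in> C"
  then show "(\<Sum>i\<in>I. f i x) = (\<Sum>i\<in>I. f i y)"
    using assms unfolding class_fun_def by (intro sum.cong) blast+
qed

lemma class_fun_mult:
  assumes "class_fun D f"
  shows "class_fun D (\<lambda>g. c * f g)"
  unfolding class_fun_def
proof (intro ballI)
  fix C x y assume "C \<in> D" "x \<in> C" "y \<in> C"
  then have "f x = f y"
    using assms unfolding class_fun_def by blast
  then show "c * f x = c * f y" by simp
qed

definition pair_count :: "nat \<Rightarrow> (int \<times> int) set \<Rightarrow> (int \<times> int) set \<Rightarrow> int \<times> int \<Rightarrow> nat" where
  "pair_count n X Y g = card {(x, y). x \<in> X \<and> y \<in> Y \<and> gmul n x y = g}"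

lemma pair_count_eq_sum:
  assumes "finite X" "finite Y"
  shows "pair_count n X Y g = (\<Sum>x\<in>X. \<Sum>y\<in>Y. if gmul n x y = g then 1 else 0)"
proof -
  have "{(x, y). x \<in> X \<and> y \<in> Y \<and> gmul n x y = g} = {p \<in> X \<times> Y. gmul n (fst p) (snd p) = g}"
    by auto
  moreover have "card {p \<in> X \<times> Y. gmul n (fst p) (snd p) = g} =
      (\<Sum>p\<in>X \<times> Y. if gmul n (fst p) (snd p) = g then 1 else 0)"
    using assms by (simp add: sum.inter_filter[symmetric])
  ultimately show ?thesis
    using assms by (simp add: pair_count_def sum.cartesian_product case_prod_beta)
qed

lemma pair_count_eq_card_ginv:
  assumes "n \<ge> 1" "g \<in> grp n" "Y \<subseteq> grp n"
  shows "pair_count n X Y g = card {x\<in>X. gmul n (ginv n x) g \<in> Y}"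
proof -
  have "{(x, y). x \<in> X \<and> y \<in> Y \<and> gmul n x y = g} = (\<lambda>x. (x, gmul n (ginv n x) g)) ` {x\<in>X. gmul n (ginv n x) g \<in> Y}"
  proof (intro set_eqI iffI)
    fix p assume "p \<in> {(x, y). x \<in> X \<and> y \<in> Y \<and> gmul n x y = g}"
    then obtain x y where p: "p = (x, y)" "x \<in> X" "y \<in> Y" "gmul n x y = g" by auto
    then have "gmul n (ginv n x) g = gmul n (gmul n (ginv n x) x) y"
      by (simp add: gmul_assoc)
    also have "\<dots> = y"
      using p(3) assms(3) by (simp add: gmul_ginv_left gmul_gone_left subsetD)
    finally have "gmul n (ginv n x) g = y" .
    then show "p \<in> (\<lambda>x. (x, gmul n (ginv n x) g)) ` {x\<in>X. gmul n (ginv n x) g \<in> Y}"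
      using p by auto
  next
    fix p assume "p \<in> (\<lambda>x. (x, gmul n (ginv n x) g)) ` {x\<in>X. gmul n (ginv n x) g \<in> Y}"
    then show "p \<in> {(x, y). x \<in> X \<and> y \<in> Y \<and> gmul n x y = g}"
      using assms(2) by (auto simp: gmul_assoc[symmetric] gmul_ginv_right gmul_gone_left)
  qed
  then show ?thesis
    by (simp add: pair_count_def card_image inj_on_def)
qed

locale schur_ring_ZZn =
  fixes F :: "'f::field_char_0 itself" and n :: nat and D :: "(int \<times> int) set set"
  assumes n_pos: "n \<ge> 1" and schur: "schur_ring F n D"
begin

lemma Union_classes: "\<Union>D = grp n"
  using schur by (simp add: schur_ring_def)

lemma finite_class: "C \<in> D \<Longrightarrow> finite C"
  using schur by (simp add: schur_ring_def)

lemma class_nonempty: "C \<in> D \<Longrightarrow> C \<noteq> {}"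
  using schur by (simp add: schur_ring_def)

lemma class_eq: "C \<in> D \<Longrightarrow> C' \<in> D \<Longrightarrow> x \<in> C \<Longrightarrow> x \<in> C' \<Longrightarrow> C = C'"
  using schur unfolding schur_ring_def by blast

lemma class_subset_grp: "C \<in> D \<Longrightarrow> C \<subseteq> grp n"
  using Union_classes by blast

lemma singleton_gone_class: "{gone} \<in> D"
  using schur by (simp add: schur_ring_def)

lemma ginv_image_class: "C \<in> D \<Longrightarrow> ginv n ` C \<in> D"
  using schur by (simp add: schur_ring_def)

text \<open>The structure constants of the Schur ring are the pair counts of classes; in characteristic 0
  they are determined by their images in \<open>F\<close>.\<close>

lemma class_fun_pair_count_classes:
  assumes C: "C \<in> D" and C': "C' \<in> D"
  shows "class_fun D (pair_count n C C')"
proof -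
  obtain T c where T: "T \<subseteq> D"
    and prod: "gconv n (csum F C) (csum F C') = (\<lambda>g. \<Sum>E\<in>T. (c E :: 'f) * csum F E g)"
    using schur C C' unfolding schur_ring_def by meson
  have "(of_nat (pair_count n C C' g) :: 'f) = (\<Sum>E\<in>T. c E * csum F E g)" for g
  proof -
    have "{(u, v). u \<in> grp n \<and> v \<in> grp n \<and> csum F C u \<noteq> (0::'f) \<and> csum F C' v \<noteq> 0 \<and> gmul n u v = g}
        = {(x, y). x \<in> C \<and> y \<in> C' \<and> gmul n x y = g}"
      using class_subset_grp[OF C] class_subset_grp[OF C'] by (auto simp: csum_def)
    then have "gconv n (csum F C) (csum F C') g =
        (\<Sum>p\<in>{(x, y). x \<in> C \<and> y \<in> C' \<and> gmul n x y = g}. csum F C (fst p) * csum F C' (snd p))"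
      unfolding gconv_def by simp
    also have "\<dots> = (\<Sum>p\<in>{(x, y). x \<in> C \<and> y \<in> C' \<and> gmul n x y = g}. 1)"
      by (rule sum.cong) (auto simp: csum_def)
    finally show ?thesis
      using prod by (simp add: pair_count_def)
  qed
  moreover have "(\<Sum>E\<in>T. c E * csum F E x) = (\<Sum>E\<in>T. c E * csum F E y)"
    if "E \<in> D" "x \<in> E" "y \<in> E" for E x y
  proof (rule sum.cong[OF refl])
    fix E' assume "E' \<in> T"
    then have "x \<in> E' \<longleftrightarrow> y \<in> E'"
      using T that class_eq by blast
    then show "c E' * csum F E' x = c E' * csum F E' y"
      by (simp add: csum_def)
  qed
  ultimately show ?thesis
    unfolding class_fun_def by (metis of_nat_eq_iff)
qed

lemma S_subset_iff: "S_subset D X \<longleftrightarrow> X \<subseteq> grp n \<and> (\<forall>C\<in>D. C \<inter> X \<noteq> {} \<longrightarrow> C \<subseteq> X)"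
proof
  assume "S_subset D X"
  then obtain T where T: "T \<subseteq> D" "X = \<Union>T"
    unfolding S_subset_def by blast
  have "C \<subseteq> X" if C: "C \<in> D" "C \<inter> X \<noteq> {}" for C
  proof -
    from C T obtain x C' where "x \<in> C" "x \<in> C'" "C' \<in> T"
      by blast
    then have "C = C'"
      using C(1) T(1) class_eq by blast
    then show ?thesis
      using \<open>C' \<in> T\<close> T(2) by blast
  qed
  moreover have "X \<subseteq> grp n"
    using T class_subset_grp by blast
  ultimately show "X \<subseteq> grp n \<and> (\<forall>C\<in>D. C \<inter> X \<noteq> {} \<longrightarrow> C \<subseteq> X)"
    by blast
next
  assume X: "X \<subseteq> grp n \<and> (\<forall>C\<in>D. C \<inter> X \<noteq> {} \<longrightarrow> C \<subseteq> X)"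
  have "X \<subseteq> \<Union>{C\<in>D. C \<subseteq> X}"
  proof
    fix x assume "x \<in> X"
    then have "x \<in> grp n"
      using X by blast
    then obtain C where "C \<in> D" "x \<in> C"
      unfolding Union_classes[symmetric] by blast
    moreover have "C \<inter> X \<noteq> {}"
      using \<open>x \<in> C\<close> \<open>x \<in> X\<close> by blast
    ultimately have "C \<subseteq> X"
      using X by blast
    then show "x \<in> \<Union>{C\<in>D. C \<subseteq> X}"
      using \<open>C \<in> D\<close> \<open>x \<in> C\<close> by blast
  qed
  then have "{C\<in>D. C \<subseteq> X} \<subseteq> D \<and> X = \<Union>{C\<in>D. C \<subseteq> X}"
    by blast
  then show "S_subset D X"
    unfolding S_subset_def by (rule exI)
qed

lemma S_subset_subset_grp: "S_subset D X \<Longrightarrow> X \<subseteq> grp n"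
  by (simp add: S_subset_iff)

lemma S_subset_class_subset: "S_subset D X \<Longrightarrow> C \<in> D \<Longrightarrow> x \<in> C \<Longrightarrow> x \<in> X \<Longrightarrow> C \<subseteq> X"
  unfolding S_subset_iff by blast

lemma S_subset_class: "C \<in> D \<Longrightarrow> S_subset D C"
  unfolding S_subset_def by (rule exI[of _ "{C}"]) auto

lemma S_subset_level_set:
  assumes "class_fun D f"
  shows "S_subset D {g \<in> grp n. P (f g)}"
  unfolding S_subset_iff
proof (intro conjI ballI impI subsetI)
  fix C y assume C: "C \<in> D" "C \<inter> {g \<in> grp n. P (f g)} \<noteq> {}" and "y \<in> C"
  then obtain x where "x \<in> C" "P (f x)" by blast
  moreover have "f y = f x"
    using assms C(1) \<open>x \<in> C\<close> \<open>y \<in> C\<close> unfolding class_fun_def by blast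
  ultimately show "y \<in> {g \<in> grp n. P (f g)}"
    using class_subset_grp[OF C(1)] \<open>y \<in> C\<close> by auto
qed auto

lemma S_subset_Int:
  assumes "S_subset D X" "S_subset D Y"
  shows "S_subset D (X \<inter> Y)"
  unfolding S_subset_iff
proof (intro conjI ballI impI)
  show "X \<inter> Y \<subseteq> grp n"
    using assms(1) S_subset_subset_grp by blast
  fix C assume "C \<in> D" "C \<inter> (X \<inter> Y) \<noteq> {}"
  then show "C \<subseteq> X \<inter> Y"
    using assms S_subset_class_subset by blast
qed

lemma S_subset_Union:
  assumes "\<And>X. X \<in> A \<Longrightarrow> S_subset D X"
  shows "S_subset D (\<Union>A)"
  unfolding S_subset_iff
proof (intro conjI ballI impI)
  show "\<Union>A \<subseteq> grp n"
    using assms S_subset_subset_grp by blast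
  fix C assume "C \<in> D" "C \<inter> \<Union>A \<noteq> {}"
  then show "C \<subseteq> \<Union>A"
    using assms S_subset_class_subset by blast
qed

lemma S_subset_ginv_image: "S_subset D X \<Longrightarrow> S_subset D (ginv n ` X)"
proof -
  assume "S_subset D X"
  then obtain T where T: "T \<subseteq> D" "X = \<Union>T" by (auto simp: S_subset_def)
  then have "ginv n ` X = \<Union>((`) (ginv n) ` T)" "(`) (ginv n) ` T \<subseteq> D"
    using ginv_image_class by auto
  then show ?thesis
    unfolding S_subset_def by blast
qed

lemma sum_S_subset:
  assumes "S_subset D X"
  shows "(\<Sum>x\<in>X. h x) = (\<Sum>C\<in>{C\<in>D. C \<subseteq> X}. \<Sum>x\<in>C. h x)"
proof -
  obtain T where T: "T \<subseteq> D" "X = \<Union>T"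
    using assms unfolding S_subset_def by blast
  then have "T = {C\<in>D. C \<subseteq> X}"
    using class_eq class_nonempty by blast
  moreover have "\<forall>A\<in>T. \<forall>B\<in>T. A \<noteq> B \<longrightarrow> A \<inter> B = {}"
    using T(1) class_eq by blast
  moreover have "\<forall>A\<in>T. finite A"
    using T(1) finite_class by blast
  ultimately show ?thesis
    using T(2) sum.Union_disjoint[of T h] by simp
qed

lemma class_fun_weighted_pair_count:
  assumes X: "S_subset D X" and Y: "S_subset D Y" and \<phi>: "class_fun D \<phi>"
  shows "class_fun D (\<lambda>g. \<Sum>x\<in>X. \<Sum>y\<in>Y. if gmul n x y = g then \<phi> y else (0::nat))"
proof -
  let ?T = "\<lambda>X. {C\<in>D. C \<subseteq> X}"
  have block: "(\<Sum>x\<in>C. \<Sum>y\<in>C'. if gmul n x y = g then \<phi> y else 0) = \<phi> (SOME y. y \<in> C') * pair_count n C C' g"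
    if "C \<in> D" "C' \<in> D" for C C' g
  proof -
    have "\<phi> y = \<phi> (SOME y. y \<in> C')" if "y \<in> C'" for y
      using \<phi> \<open>C' \<in> D\<close> that unfolding class_fun_def by (metis someI)
    then have "(\<Sum>x\<in>C. \<Sum>y\<in>C'. if gmul n x y = g then \<phi> y else 0) =
        (\<Sum>x\<in>C. \<Sum>y\<in>C'. \<phi> (SOME y. y \<in> C') * (if gmul n x y = g then 1 else 0))"
      by (intro sum.cong) auto
    then show ?thesis
      using that finite_class by (simp add: pair_count_eq_sum sum_distrib_left)
  qed
  have "(\<Sum>x\<in>X. \<Sum>y\<in>Y. if gmul n x y = g then \<phi> y else 0) =
      (\<Sum>C\<in>?T X. \<Sum>C'\<in>?T Y. \<phi> (SOME y. y \<in> C') * pair_count n C C' g)" for g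
  proof -
    have "(\<Sum>x\<in>X. \<Sum>y\<in>Y. if gmul n x y = g then \<phi> y else 0) =
        (\<Sum>C\<in>?T X. \<Sum>x\<in>C. \<Sum>C'\<in>?T Y. \<Sum>y\<in>C'. if gmul n x y = g then \<phi> y else 0)"
      by (simp only: sum_S_subset[OF X] sum_S_subset[OF Y])
    also have "\<dots> = (\<Sum>C\<in>?T X. \<Sum>C'\<in>?T Y. \<Sum>x\<in>C. \<Sum>y\<in>C'. if gmul n x y = g then \<phi> y else 0)"
      by (rule sum.cong[OF refl], rule sum.swap)
    also have "\<dots> = (\<Sum>C\<in>?T X. \<Sum>C'\<in>?T Y. \<phi> (SOME y. y \<in> C') * pair_count n C C' g)"
      using block by (intro sum.cong refl) auto
    finally show ?thesis .
  qed
  moreover have "class_fun D (\<lambda>g. \<Sum>C\<in>?T X. \<Sum>C'\<in>?T Y. \<phi> (SOME y. y \<in> C') * pair_count n C C' g)"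
    by (intro class_fun_sum class_fun_mult class_fun_pair_count_classes) auto
  ultimately show ?thesis
    by simp
qed

lemma class_fun_pair_count:
  assumes "finite X" "S_subset D X" "finite Y" "S_subset D Y"
  shows "class_fun D (pair_count n X Y)"
proof -
  have eq: "pair_count n X Y = (\<lambda>g. \<Sum>x\<in>X. \<Sum>y\<in>Y. if gmul n x y = g then 1 else 0)"
    using assms(1,3) by (simp add: fun_eq_iff pair_count_eq_sum)
  have "class_fun D (\<lambda>_. 1::nat)"
    by (simp add: class_fun_def)
  then show ?thesis
    unfolding eq by (rule class_fun_weighted_pair_count[OF assms(2,4)])
qed

lemma class_fun_prod_count:
  assumes X: "finite X" "S_subset D X"
  shows "class_fun D (prod_count n X k)"
proof (induction k)
  case 0
  have "x = gone \<longleftrightarrow> y = gone" if "C \<in> D" "x \<in> C" "y \<in> C" for C x y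
    using that class_eq[OF _ singleton_gone_class] by blast
  then show ?case
    unfolding class_fun_def prod_count_0 by metis
next
  case (Suc k)
  have "S_subset D (prod_set n X k)"
    unfolding prod_set_eq_support[OF X(1) n_pos] using Suc by (rule S_subset_level_set)
  moreover have "prod_count n X (Suc k) =
      (\<lambda>g. \<Sum>x\<in>X. \<Sum>u\<in>prod_set n X k. if gmul n x u = g then prod_count n X k u else 0)"
    by (simp add: fun_eq_iff prod_count_Suc[OF X(1)])
  ultimately show ?case
    using class_fun_weighted_pair_count[OF X(2) _ Suc] by simp
qed

lemma S_subset_prod_set:
  assumes "finite X" "S_subset D X"
  shows "S_subset D (prod_set n X k)"
  unfolding prod_set_eq_support[OF assms(1) n_pos]
  by (rule S_subset_level_set[OF class_fun_prod_count[OF assms]])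


lemma S_subset_gpow_prime:
  assumes p: "prime p" "\<not> p dvd n" and X: "finite X" "S_subset D X"
  shows "S_subset D (gpow n p ` X)"
proof -
  have "inj_on (gpow n p) X"
    using inj_on_gpow[of p n] prime_imp_coprime[OF p] prime_ge_1_nat[OF p(1)] S_subset_subset_grp[OF X(2)]
    by (blast intro: inj_on_subset)
  then have fiber: "card {x\<in>X. gpow n p x = g} = (if g \<in> gpow n p ` X then 1 else 0)" for g
  proof (cases "g \<in> gpow n p ` X")
    case True
    then obtain x0 where "x0 \<in> X" "g = gpow n p x0" by blast
    then have "{x\<in>X. gpow n p x = g} = {x0}"
      using \<open>inj_on (gpow n p) X\<close> by (auto dest: inj_onD)
    then show ?thesis using True by simp
  next
    case False
    then have "{x\<in>X. gpow n p x = g} = {}" by blast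
    then show ?thesis using False by (simp only: card.empty if_False)
  qed
  have "gpow n p ` X = {g \<in> grp n. prod_count n X p g mod p \<noteq> 0}"
    using prod_count_prime_mod[OF X(1) p(1)] fiber prime_gt_1_nat[OF p(1)] gpow_in_grp[OF n_pos]
    by auto
  then show ?thesis
    using S_subset_level_set[OF class_fun_prod_count[OF X]] by simp
qed

lemma S_subset_gpow:
  assumes "coprime r n" "r \<ge> 1" "finite X" "S_subset D X"
  shows "S_subset D (gpow n r ` X)"
  using assms
proof (induction r arbitrary: X rule: prime_divisors_induct)
  case zero
  then show ?case by simp
next
  case (unit r)
  then have "gpow n r ` X = X"
    using gpow_1 S_subset_subset_grp[OF unit.prems(4)] by force
  then show ?case using unit.prems by simp
next
  case (factor p r)
  then have "coprime p n" "coprime r n" "r \<ge> 1" by auto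
  then have "\<not> p dvd n"
    using factor.hyps(1) by (metis coprime_common_divisor dvd_refl not_prime_unit)
  moreover have "S_subset D (gpow n r ` X)"
    using factor.IH \<open>coprime r n\<close> \<open>r \<ge> 1\<close> factor.prems(3,4) by blast
  moreover have "gpow n (p * r) ` X = gpow n p ` gpow n r ` X"
    by (simp add: gpow_mult image_image)
  ultimately show ?case
    using S_subset_gpow_prime[OF factor.hyps(1)] factor.prems(3) by simp
qed

end

section \<open>Pairs in a common layer\<close>

definition layer :: "(int \<times> int) set \<Rightarrow> int \<Rightarrow> (int \<times> int) set" where
  "layer X k = {x\<in>X. fst x = k}"

text \<open>For \<open>r \<equiv> 1 (mod n)\<close> the product \<open>y\<^sup>r x\<^sup>-\<^sup>(\<^sup>r\<^sup>-\<^sup>n\<^sup>)\<close> equals \<open>(r fst y - (r - n) fst x, snd y - snd x)\<close>.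
  When \<open>y\<close> and \<open>x\<close> lie in a common layer \<open>k\<close> this is \<open>(n k, snd y - snd x)\<close>, independently of \<open>r\<close>;
  otherwise it is far from the origin for large \<open>r\<close>.\<close>

definition shifted_pairs :: "nat \<Rightarrow> (int \<times> int) set \<Rightarrow> nat \<Rightarrow> int \<times> int \<Rightarrow> ((int \<times> int) \<times> (int \<times> int)) set" where
  "shifted_pairs n X r g = {(y, x). y \<in> X \<and> x \<in> X \<and>
     int r * fst y - (int r - int n) * fst x = fst g \<and> (snd y - snd x) mod int n = snd g}"

definition layer_pairs :: "nat \<Rightarrow> (int \<times> int) set \<Rightarrow> int \<times> int \<Rightarrow> ((int \<times> int) \<times> (int \<times> int)) set" where
  "layer_pairs n X g = {(y, x). y \<in> X \<and> x \<in> X \<and> fst y = fst x \<and>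
     int n * fst y = fst g \<and> (snd y - snd x) mod int n = snd g}"

lemma int_mult_mod_eq_if_mod_eq_1:
  "r mod n = 1 mod n \<Longrightarrow> (int r * s) mod int n = s mod int n"
  by (metis of_nat_mod mod_mult_cong mult.commute mult.right_neutral of_nat_1)

lemma one_plus_mult_mod: "(1 + n * k) mod n = 1 mod (n::nat)"
  by (metis mod_mult_self2)

lemma coprime_if_mod_eq_1: "r mod n = 1 mod n \<Longrightarrow> coprime r (n::nat)"
  by (metis One_nat_def coprime_Suc_0_left coprime_mod_left_iff mod_by_0)

lemma gmul_gpow_ginv_gpow:
  assumes "r mod n = 1 mod n" "r' mod n = 1 mod n"
  shows "gmul n (gpow n r y) (ginv n (gpow n r' x)) =
    (int r * fst y - int r' * fst x, (snd y - snd x) mod int n)"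
proof -
  have "(int r * snd y mod int n + - (int r' * snd x mod int n) mod int n) mod int n
      = (int r * snd y - int r' * snd x) mod int n"
    by (simp add: mod_minus_eq mod_add_eq)
  also have "\<dots> = (int r * snd y mod int n - int r' * snd x mod int n) mod int n"
    by (simp add: mod_diff_eq)
  also have "\<dots> = (snd y - snd x) mod int n"
    using assms by (simp add: int_mult_mod_eq_if_mod_eq_1 mod_diff_eq)
  finally show ?thesis
    by (simp add: gmul_def gpow_def ginv_def)
qed

lemma abs_shifted_diff_ge:
  fixes r m B a b :: int
  assumes "\<bar>a\<bar> \<le> B" "\<bar>b\<bar> \<le> B" "a \<noteq> b" "0 \<le> m" "0 \<le> r"
  shows "r - m * B \<le> \<bar>r * a - (r - m) * b\<bar>"
proof -
  have "r * 1 \<le> r * \<bar>a - b\<bar>"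
    using assms(3,5) by (intro mult_left_mono) auto
  moreover have "\<bar>m * b\<bar> \<le> m * B"
    using assms(2,4) by (simp add: abs_mult mult_left_mono)
  moreover have "\<bar>r * (a - b)\<bar> \<le> \<bar>r * (a - b) + m * b\<bar> + \<bar>m * b\<bar>"
    using abs_triangle_ineq4[of "r * (a - b) + m * b" "m * b"] by simp
  moreover have "r * a - (r - m) * b = r * (a - b) + m * b"
    by (simp add: algebra_simps)
  ultimately show ?thesis
    using assms(5) by (simp add: abs_mult)
qed

lemma abs_shifted_diff_le:
  fixes r m B a b :: int
  assumes "\<bar>a\<bar> \<le> B" "\<bar>b\<bar> \<le> B" "0 \<le> m" "m \<le> r"
  shows "\<bar>r * a - (r - m) * b\<bar> \<le> 2 * r * B"
proof -
  have "\<bar>r * a\<bar> \<le> r * B"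
    using assms by (simp add: abs_mult mult_left_mono)
  moreover have "\<bar>(r - m) * b\<bar> \<le> (r - m) * B"
    using assms by (simp add: abs_mult mult_left_mono)
  moreover have "(r - m) * B \<le> r * B"
    using assms by (simp add: mult_right_mono)
  ultimately show ?thesis
    by linarith
qed

lemma shifted_pairs_eq_layer_pairs:
  assumes B: "\<And>x. x \<in> X \<Longrightarrow> \<bar>fst x\<bar> \<le> B" and g: "\<bar>fst g\<bar> \<le> int n * B" and r: "2 * int n * B < int r"
  shows "shifted_pairs n X r g = layer_pairs n X g"
proof (intro set_eqI iffI)
  fix p assume "p \<in> shifted_pairs n X r g"
  then obtain y x where p: "p = (y, x)" "y \<in> X" "x \<in> X"
      "int r * fst y - (int r - int n) * fst x = fst g" "(snd y - snd x) mod int n = snd g"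
    by (auto simp: shifted_pairs_def)
  have "fst y = fst x"
  proof (rule ccontr)
    assume "fst y \<noteq> fst x"
    then have "int r - int n * B \<le> \<bar>fst g\<bar>"
      using abs_shifted_diff_ge[of "fst y" B "fst x" "int n" "int r"] B p by simp
    then show False using g r by linarith
  qed
  with p show "p \<in> layer_pairs n X g"
    by (auto simp: layer_pairs_def algebra_simps)
next
  fix p assume "p \<in> layer_pairs n X g"
  then show "p \<in> shifted_pairs n X r g"
    by (auto simp: layer_pairs_def shifted_pairs_def algebra_simps)
qed

lemma layer_pairs_eq_empty:
  assumes B: "\<And>x. x \<in> X \<Longrightarrow> \<bar>fst x\<bar> \<le> B" and g: "int n * B < \<bar>fst g\<bar>"
  shows "layer_pairs n X g = {}"
proof -
  have "\<bar>int n * fst y\<bar> \<le> int n * B" if "y \<in> X" for y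
    using B[OF that] by (simp add: abs_mult mult_left_mono)
  then show ?thesis
    using g by (force simp: layer_pairs_def)
qed

lemma shifted_pairs_far:
  assumes B: "\<And>x. x \<in> X \<Longrightarrow> \<bar>fst x\<bar> \<le> B" and g: "int n * B < \<bar>fst g\<bar>" and r: "n \<le> r"
    and p: "p \<in> shifted_pairs n X r g"
  shows "int r - int n * B \<le> \<bar>fst g\<bar> \<and> \<bar>fst g\<bar> \<le> 2 * int r * B"
proof -
  obtain y x where yx: "y \<in> X" "x \<in> X" "int r * fst y - (int r - int n) * fst x = fst g"
    using p by (auto simp: shifted_pairs_def)
  have "fst y \<noteq> fst x"
  proof
    assume "fst y = fst x"
    then have "fst g = int n * fst y"
      using yx(3) by (simp add: algebra_simps)
    moreover have "\<bar>int n * fst y\<bar> \<le> int n * B"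
      using B[OF yx(1)] by (simp add: abs_mult mult_left_mono)
    ultimately show False using g by simp
  qed
  then show ?thesis
    using abs_shifted_diff_ge[of "fst y" B "fst x" "int n" "int r"]
      abs_shifted_diff_le[of "fst y" B "fst x" "int n" "int r"] B yx r by simp
qed

context schur_ring_ZZn
begin

lemma card_shifted_pairs_eq_pair_count:
  assumes X: "X \<subseteq> grp n" and r: "r mod n = 1 mod n" "n < r"
  shows "card (shifted_pairs n X r g) = pair_count n (gpow n r ` X) (ginv n ` gpow n (r - n) ` X) g"
proof -
  define f where "f q = (gpow n r (fst q), ginv n (gpow n (r - n) (snd q)))" for q :: "(int \<times> int) \<times> (int \<times> int)"
  have r': "(r - n) mod n = 1 mod n"
    using r by (metis le_add_diff_inverse2 less_imp_le mod_add_self2)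
  have prod: "gmul n (gpow n r y) (ginv n (gpow n (r - n) x)) =
      (int r * fst y - (int r - int n) * fst x, (snd y - snd x) mod int n)" for y x
    using gmul_gpow_ginv_gpow[OF r(1) r'] r by (simp add: of_nat_diff)
  have inj_r: "inj_on (gpow n r) X" "inj_on (gpow n (r - n)) X"
    using r r' inj_on_subset[OF inj_on_gpow[OF coprime_if_mod_eq_1] X] by simp_all
  have "inj_on f (X \<times> X)"
  proof (rule inj_onI)
    fix p q assume pq: "p \<in> X \<times> X" "q \<in> X \<times> X" "f p = f q"
    then have "gpow n r (fst p) = gpow n r (fst q)" "gpow n (r - n) (snd p) = gpow n (r - n) (snd q)"
      unfolding f_def by (auto, metis ginv_ginv gpow_in_grp[OF n_pos])
    then have "fst p = fst q" "snd p = snd q"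
      using pq(1,2) inj_r by (auto dest: inj_onD)
    then show "p = q"
      by (rule prod_eqI)
  qed
  moreover have "shifted_pairs n X r g \<subseteq> X \<times> X"
    by (auto simp: shifted_pairs_def)
  ultimately have inj: "inj_on f (shifted_pairs n X r g)"
    by (rule inj_on_subset)
  have "{(u, v). u \<in> gpow n r ` X \<and> v \<in> ginv n ` gpow n (r - n) ` X \<and> gmul n u v = g}
      = f ` shifted_pairs n X r g"
  proof (intro set_eqI iffI)
    fix p
    assume "p \<in> {(u, v). u \<in> gpow n r ` X \<and> v \<in> ginv n ` gpow n (r - n) ` X \<and> gmul n u v = g}"
    then obtain y x where yx: "y \<in> X" "x \<in> X" "p = f (y, x)"
        "gmul n (gpow n r y) (ginv n (gpow n (r - n) x)) = g"
      unfolding f_def by auto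
    then have "(y, x) \<in> shifted_pairs n X r g"
      unfolding prod shifted_pairs_def by auto
    then show "p \<in> f ` shifted_pairs n X r g"
      using yx(3) by (rule rev_image_eqI)
  next
    fix p assume "p \<in> f ` shifted_pairs n X r g"
    then obtain y x where yx: "(y, x) \<in> shifted_pairs n X r g" "p = f (y, x)"
      by auto
    then have "gmul n (gpow n r y) (ginv n (gpow n (r - n) x)) = g"
      unfolding prod by (simp add: shifted_pairs_def prod_eq_iff)
    then show "p \<in> {(u, v). u \<in> gpow n r ` X \<and> v \<in> ginv n ` gpow n (r - n) ` X \<and> gmul n u v = g}"
      using yx unfolding f_def shifted_pairs_def by auto
  qed
  then show ?thesis
    unfolding pair_count_def using inj by (simp add: card_image)
qed


lemma class_fun_card_shifted_pairs:
  assumes X: "finite X" "S_subset D X" and r: "r mod n = 1 mod n" "n < r"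
  shows "class_fun D (\<lambda>g. card (shifted_pairs n X r g))"
proof -
  have r': "(r - n) mod n = 1 mod n" "r - n \<ge> 1"
    using r by (metis le_add_diff_inverse2 less_imp_le mod_add_self2, simp)
  have "S_subset D (gpow n r ` X)" "S_subset D (ginv n ` gpow n (r - n) ` X)"
    using X r r' by (auto intro!: S_subset_gpow S_subset_ginv_image coprime_if_mod_eq_1)
  then show ?thesis
    using class_fun_pair_count X(1) card_shifted_pairs_eq_pair_count[OF S_subset_subset_grp[OF X(2)] r]
    by simp
qed

text \<open>Two shifts \<open>r\<^sub>1 < r\<^sub>2\<close> suffice to separate the layer pairs from all others: a non-layer
  pair for \<open>r\<^sub>1\<close> lies below \<open>2 r\<^sub>1 B\<close>, one for \<open>r\<^sub>2\<close> lies above \<open>r\<^sub>2 - n B\<close>.\<close>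

lemma S_subset_card_layer_pairs:
  assumes X: "finite X" "S_subset D X" and v: "v \<ge> 1"
  shows "S_subset D {g \<in> grp n. card (layer_pairs n X g) = v}"
proof -
  define B :: int where "B = (\<Sum>x\<in>X. \<bar>fst x\<bar>)"
  have B: "\<bar>fst x\<bar> \<le> B" if "x \<in> X" for x
    unfolding B_def using member_le_sum[of x X "\<lambda>x. \<bar>fst x\<bar>"] X(1) that by simp
  have "B \<ge> 0" unfolding B_def by (simp add: sum_nonneg)
  define r1 where "r1 = 1 + n * (2 * nat B + 1)"
  define r2 where "r2 = 1 + n * (2 * r1 * nat B + nat B + 1)"
  have nB: "0 \<le> int n * B" using \<open>B \<ge> 0\<close> by simp
  have i1: "int r1 = 1 + 2 * (int n * B) + int n"
    unfolding r1_def using \<open>B \<ge> 0\<close> by (simp add: algebra_simps)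
  have r1: "r1 mod n = 1 mod n" "n < r1" "2 * int n * B < int r1"
    using i1 nB by (simp only: r1_def one_plus_mult_mod, linarith, simp add: mult.assoc)
  have i2: "int r2 = 1 + 2 * (int n * (int r1 * B)) + int n * B + int n"
    unfolding r2_def using \<open>B \<ge> 0\<close> by (simp add: algebra_simps)
  have "B \<le> int r1 * B"
    using mult_right_mono[of 1 "int r1" B] r1(2) \<open>B \<ge> 0\<close> by simp
  then have "int n * B \<le> int n * (int r1 * B)"
    by (simp add: mult_left_mono)
  moreover have "int r1 * B \<le> int n * (int r1 * B)"
    using mult_right_mono[of 1 "int n" "int r1 * B"] n_pos \<open>B \<ge> 0\<close> by simp
  ultimately have r2: "r2 mod n = 1 mod n" "n < r2" "2 * int n * B < int r2" "2 * int r1 * B < int r2 - int n * B"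
    using i2 nB unfolding mult.assoc by (simp only: r2_def one_plus_mult_mod, linarith+)
  let ?L = "\<lambda>r. {g \<in> grp n. card (shifted_pairs n X r g) = v}"
  have "{g \<in> grp n. card (layer_pairs n X g) = v} = ?L r1 \<inter> ?L r2"
  proof (intro set_eqI iffI)
    fix g assume g: "g \<in> {g \<in> grp n. card (layer_pairs n X g) = v}"
    then have "layer_pairs n X g \<noteq> {}"
      using v by auto
    then have "\<bar>fst g\<bar> \<le> int n * B"
      using layer_pairs_eq_empty[OF B] by (meson not_le)
    then have "shifted_pairs n X r1 g = layer_pairs n X g" "shifted_pairs n X r2 g = layer_pairs n X g"
      using shifted_pairs_eq_layer_pairs[OF B] r1(3) r2(3) by blast+
    then show "g \<in> ?L r1 \<inter> ?L r2"
      using g by (simp only: Int_iff mem_Collect_eq)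
  next
    fix g assume g: "g \<in> ?L r1 \<inter> ?L r2"
    show "g \<in> {g \<in> grp n. card (layer_pairs n X g) = v}"
    proof (cases "\<bar>fst g\<bar> \<le> int n * B")
      case True
      then have "shifted_pairs n X r1 g = layer_pairs n X g"
        using shifted_pairs_eq_layer_pairs[OF B] r1(3) by blast
      then show ?thesis
        using g by (simp only: Int_iff mem_Collect_eq)
    next
      case False
      from g have "card (shifted_pairs n X r1 g) = v" "card (shifted_pairs n X r2 g) = v"
        by auto
      then have "shifted_pairs n X r1 g \<noteq> {}" "shifted_pairs n X r2 g \<noteq> {}"
        using v by auto
      then obtain p1 p2 where "p1 \<in> shifted_pairs n X r1 g" "p2 \<in> shifted_pairs n X r2 g"
        by blast
      then have "\<bar>fst g\<bar> \<le> 2 * int r1 * B" "int r2 - int n * B \<le> \<bar>fst g\<bar>"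
        using shifted_pairs_far[OF B] False r1(2) r2(2) by (meson less_imp_le not_le)+
      then show ?thesis
        using r2(4) by simp
    qed
  qed
  then show ?thesis
    using S_subset_Int[OF S_subset_level_set[OF class_fun_card_shifted_pairs[OF X r1(1,2)]]
      S_subset_level_set[OF class_fun_card_shifted_pairs[OF X r2(1,2)]]] by simp
qed

text \<open>A class meeting \<open>\<int>\<^sub>n\<close> is fixed pointwise by \<open>x \<mapsto> x\<^sup>r\<close> for \<open>r \<equiv> 1 (mod n)\<close> there, hence
  contained in \<open>C\<^sup>(\<^sup>r\<^sup>)\<close>; for large \<open>r\<close> this forces its first coordinates to vanish.\<close>

lemma S_subset_Znpart: "S_subset D (Znpart n)"
  unfolding S_subset_iff
proof (intro conjI ballI impI)
  show "Znpart n \<subseteq> grp n"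
    by (auto simp: Znpart_def grp_def)
  fix C assume C: "C \<in> D" "C \<inter> Znpart n \<noteq> {}"
  then obtain x where "x \<in> C \<inter> Znpart n" by blast
  then have x: "x \<in> C" "fst x = 0" by (auto simp: Znpart_def)
  define B :: int where "B = (\<Sum>x\<in>C. \<bar>fst x\<bar>)"
  have B: "\<bar>fst y\<bar> \<le> B" if "y \<in> C" for y
    unfolding B_def using member_le_sum[of y C "\<lambda>x. \<bar>fst x\<bar>"] finite_class[OF C(1)] that by simp
  have "B \<ge> 0" unfolding B_def by (simp add: sum_nonneg)
  define r where "r = 1 + n * (nat B + 1)"
  have ir: "int r = 1 + int n * B + int n"
    unfolding r_def using \<open>B \<ge> 0\<close> by (simp add: algebra_simps)
  have "B \<le> int n * B"
    using mult_right_mono[of 1 "int n" B] n_pos \<open>B \<ge> 0\<close> by simp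
  then have r: "r mod n = 1 mod n" "r \<ge> 1" "B < int r"
    using ir by (simp only: r_def one_plus_mult_mod, simp add: r_def, linarith)
  have "gpow n r x = x"
    using x class_subset_grp[OF C(1)] r(1)
    by (auto simp: gpow_def prod_eq_iff mem_grp_iff int_mult_mod_eq_if_mod_eq_1)
  then have "x \<in> gpow n r ` C"
    using x(1) by (metis image_eqI)
  moreover have "S_subset D (gpow n r ` C)"
    using C(1) r by (intro S_subset_gpow coprime_if_mod_eq_1 finite_class S_subset_class)
  ultimately have C_sub: "C \<subseteq> gpow n r ` C"
    using S_subset_class_subset C(1) x(1) by blast
  show "C \<subseteq> Znpart n"
  proof
    fix c assume "c \<in> C"
    then obtain y where y: "y \<in> C" "c = gpow n r y"
      using C_sub by blast
    have "fst y = 0"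
    proof (rule ccontr)
      assume "fst y \<noteq> 0"
      then have "int r \<le> \<bar>fst c\<bar>"
        using y(2) mult_left_mono[of 1 "\<bar>fst y\<bar>" "int r"] by (simp add: gpow_def abs_mult)
      then show False
        using B[OF \<open>c \<in> C\<close>] r(3) by simp
    qed
    then show "c \<in> Znpart n"
      using y class_subset_grp[OF C(1)] \<open>c \<in> C\<close>
      by (auto simp: Znpart_def gpow_def mem_grp_iff)
  qed
qed

end


section \<open>Subgroups of \<open>\<int>\<^sub>n\<close>\<close>

definition zn_subgroup :: "nat \<Rightarrow> int set \<Rightarrow> bool" where
  "zn_subgroup n R \<longleftrightarrow> R \<subseteq> {0..<int n} \<and> 0 \<in> R \<and> (\<forall>a\<in>R. \<forall>b\<in>R. (a + b) mod int n \<in> R)"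

lemma zn_subgroup_bounds: "zn_subgroup n R \<Longrightarrow> d \<in> R \<Longrightarrow> 0 \<le> d \<and> d < int n"
  unfolding zn_subgroup_def by auto

lemma zn_subgroup_finite: "zn_subgroup n R \<Longrightarrow> finite R"
  unfolding zn_subgroup_def by (blast intro: finite_subset)

lemma zn_subgroup_mult:
  assumes R: "zn_subgroup n R" and d: "d \<in> R"
  shows "(int k * d) mod int n \<in> R"
proof (induction k)
  case 0
  then show ?case using R by (simp add: zn_subgroup_def)
next
  case (Suc k)
  have "(int (Suc k) * d) mod int n = ((int k * d) mod int n + d) mod int n"
    by (simp add: algebra_simps mod_add_right_eq)
  then show ?case using Suc d R by (simp add: zn_subgroup_def)
qed

lemma zn_subgroup_uminus:
  assumes n: "n \<ge> 1" and R: "zn_subgroup n R" and d: "d \<in> R"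
  shows "(- d) mod int n \<in> R"
proof -
  have "(int (n - 1) * d) mod int n = (int n * d - d) mod int n"
    using n by (simp add: of_nat_diff algebra_simps)
  also have "\<dots> = (- d) mod int n"
    by (metis diff_0 mod_diff_left_eq mod_mult_self1_is_0)
  finally show ?thesis
    using zn_subgroup_mult[OF R d, of "n - 1"] by simp
qed

lemma zn_subgroup_diff:
  assumes n: "n \<ge> 1" and R: "zn_subgroup n R" and a: "a \<in> R" and b: "b \<in> R"
  shows "(a - b) mod int n \<in> R"
proof -
  have "(a + (- b) mod int n) mod int n \<in> R"
    using R a zn_subgroup_uminus[OF n R b] by (simp add: zn_subgroup_def)
  then show ?thesis
    by (simp add: mod_add_right_eq)
qed

lemma card_zn_subgroup_shift:
  assumes n: "n \<ge> 1" and R: "zn_subgroup n R" and d: "0 \<le> d" "d < int n"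
  shows "card {e\<in>R. (e + d) mod int n \<in> R} = (if d \<in> R then card R else 0)"
proof (cases "d \<in> R")
  case True
  then have "{e\<in>R. (e + d) mod int n \<in> R} = R"
    using R by (auto simp: zn_subgroup_def)
  then show ?thesis using True by simp
next
  case False
  have "e \<notin> R \<or> (e + d) mod int n \<notin> R" for e
  proof (rule ccontr)
    assume "\<not> (e \<notin> R \<or> (e + d) mod int n \<notin> R)"
    then have "((e + d) mod int n - e) mod int n \<in> R"
      using zn_subgroup_diff[OF n R] by blast
    moreover have "((e + d) mod int n - e) mod int n = d"
      using d by (simp add: mod_diff_left_eq)
    ultimately show False using False by simp
  qed
  then have "{e\<in>R. (e + d) mod int n \<in> R} = {}" by blast
  then show ?thesis using False by (simp only: card.empty if_False)
qed

text \<open>Translation by \<open>d \<in> R\<close> permutes \<open>R\<close>, so \<open>\<Sum>R \<equiv> \<Sum>R + |R| d (mod n)\<close>.\<close>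

lemma zn_subgroup_dvd_card_mult:
  assumes R: "zn_subgroup n R" and d: "d \<in> R"
  shows "int n dvd int (card R) * d"
proof -
  define f where "f x = (x + d) mod int n" for x
  have fin: "finite R" using R by (rule zn_subgroup_finite)
  have inj: "inj_on f R"
  proof (rule inj_onI)
    fix x y assume xy: "x \<in> R" "y \<in> R" "f x = f y"
    then have "x mod int n = y mod int n"
      unfolding f_def by (simp add: mod_eq_dvd_iff)
    then show "x = y"
      using xy R by (metis atLeastLessThan_iff mod_pos_pos_trivial subsetD zn_subgroup_def)
  qed
  moreover have "f ` R \<subseteq> R"
    using R d by (auto simp: f_def zn_subgroup_def)
  ultimately have "f ` R = R"
    using endo_inj_surj[OF fin] by blast
  then have "(\<Sum>x\<in>R. x) = (\<Sum>x\<in>R. f x)"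
    using sum.reindex[OF inj, of id] by simp
  then have "(\<Sum>x\<in>R. x) mod int n = (\<Sum>x\<in>R. x + d) mod int n"
    unfolding f_def by (metis mod_sum_eq)
  then show ?thesis
    by (simp add: sum.distrib mod_eq_dvd_iff)
qed

lemma card_zn_annihilator_le:
  assumes n: "n \<ge> 1" and v: "v \<ge> 1"
  shows "card {d \<in> {0..<int n}. int n dvd int v * d} \<le> v"
proof -
  define g where "g = gcd n v"
  have "g \<ge> 1" "g \<le> v"
    using n v by (simp_all add: g_def Suc_le_eq gcd_le2_nat)
  obtain n' v' where n': "n = g * n'" and v': "v = g * v'"
    unfolding g_def by (meson dvdE gcd_dvd1 gcd_dvd2)
  have "n' \<ge> 1"
    using n n' by (cases n') auto
  have "g * gcd n' v' = gcd (g * n') (g * v')"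
    by (rule gcd_mult_distrib_nat)
  also have "\<dots> = g * 1"
    unfolding n'[symmetric] v'[symmetric] by (simp add: g_def)
  finally have "g * gcd n' v' = g * 1" .
  then have "coprime n' v'"
    using \<open>g \<ge> 1\<close> by (simp add: coprime_iff_gcd_eq_1)
  have "{d \<in> {0..<int n}. int n dvd int v * d} \<subseteq> (\<lambda>i. int n' * i) ` {0..<int g}"
  proof
    fix d assume d: "d \<in> {d \<in> {0..<int n}. int n dvd int v * d}"
    then have "int n' dvd int v' * d"
      using n' v' \<open>g \<ge> 1\<close> by (auto simp: mult.assoc)
    then have "int n' dvd d"
      using \<open>coprime n' v'\<close> by (simp add: coprime_dvd_mult_right_iff)
    then obtain i where i: "d = int n' * i" by blast
    then have "0 \<le> i" "i < int g"
      using d n' \<open>n' \<ge> 1\<close> by (auto simp: zero_le_mult_iff mult.commute[of "int g"])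
    then show "d \<in> (\<lambda>i. int n' * i) ` {0..<int g}" using i by auto
  qed
  then have "card {d \<in> {0..<int n}. int n dvd int v * d} \<le> card {0..<int g}"
    by (meson card_image_le card_mono finite_atLeastLessThan_int finite_imageI le_trans)
  also have "\<dots> \<le> v"
    using \<open>g \<le> v\<close> by simp
  finally show ?thesis .
qed

lemma zn_subgroup_eq_if_card_eq:
  assumes n: "n \<ge> 1" and R1: "zn_subgroup n R1" and R2: "zn_subgroup n R2" and c: "card R1 = card R2"
  shows "R1 = R2"
proof -
  define M where "M = {d \<in> {0..<int n}. int n dvd int (card R1) * d}"
  have "card R1 \<ge> 1"
    using R1 zn_subgroup_finite[OF R1] by (auto simp: zn_subgroup_def Suc_le_eq card_gt_0_iff)
  then have "card M \<le> card R1"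
    unfolding M_def by (rule card_zn_annihilator_le[OF n])
  moreover have "finite M"
    unfolding M_def by (rule finite_subset[of _ "{0..<int n}"]) auto
  moreover have "R1 \<subseteq> M" "R2 \<subseteq> M"
    using zn_subgroup_dvd_card_mult[OF R1] zn_subgroup_dvd_card_mult[OF R2] R1 R2 c
    by (auto simp: M_def zn_subgroup_def)
  ultimately have "R1 = M" "R2 = M"
    using c by (metis card_seteq)+
  then show ?thesis by simp
qed


section \<open>Layers and their stabilisers\<close>

definition layer_stab :: "nat \<Rightarrow> (int \<times> int) set \<Rightarrow> int \<Rightarrow> int set" where
  "layer_stab n X k = {d \<in> {0..<int n}. \<forall>x\<in>layer X k. (k, (snd x + d) mod int n) \<in> X}"

lemma zn_subgroup_layer_stab:
  assumes "n \<ge> 1" "X \<subseteq> grp n"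
  shows "zn_subgroup n (layer_stab n X k)"
  unfolding zn_subgroup_def
proof (intro conjI ballI)
  show "layer_stab n X k \<subseteq> {0..<int n}"
    by (auto simp: layer_stab_def)
  have "(k, (snd x + 0) mod int n) \<in> X" if "x \<in> layer X k" for x
  proof -
    have "(k, (snd x + 0) mod int n) = x"
      using assms(2) that by (auto simp: layer_def mem_grp_iff prod_eq_iff)
    then show ?thesis
      using that by (simp add: layer_def)
  qed
  then show "0 \<in> layer_stab n X k"
    using assms(1) by (simp add: layer_stab_def)
  fix a b assume a: "a \<in> layer_stab n X k" and b: "b \<in> layer_stab n X k"
  have "(k, (snd x + (a + b) mod int n) mod int n) \<in> X" if "x \<in> layer X k" for x
  proof -
    have "(k, (snd x + a) mod int n) \<in> layer X k"
      using a that by (auto simp: layer_stab_def layer_def)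
    then have "(k, ((snd x + a) mod int n + b) mod int n) \<in> X"
      using b by (auto simp: layer_stab_def)
    then show ?thesis
      by (simp add: mod_add_left_eq mod_add_right_eq add.assoc)
  qed
  then show "(a + b) mod int n \<in> layer_stab n X k"
    using assms(1) by (auto simp: layer_stab_def)
qed

lemma layer_pairs_nonempty_imp:
  assumes "layer_pairs n X g \<noteq> {}"
  shows "\<exists>y\<in>X. fst g = int n * fst y"
  using assms by (force simp: layer_pairs_def)

lemma card_layer_pairs:
  assumes n: "n \<ge> 1" and X: "X \<subseteq> grp n" and d: "0 \<le> d" "d < int n"
  shows "card (layer_pairs n X (int n * k, d)) = card {x\<in>layer X k. (k, (snd x + d) mod int n) \<in> X}"
proof -
  let ?f = "\<lambda>x. ((k, (snd x + d) mod int n), x)"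
  have "layer_pairs n X (int n * k, d) = ?f ` {x\<in>layer X k. (k, (snd x + d) mod int n) \<in> X}"
  proof (intro set_eqI iffI)
    fix p assume "p \<in> layer_pairs n X (int n * k, d)"
    then obtain y x where p: "p = (y, x)" "y \<in> X" "x \<in> X" "fst y = fst x" "fst y = k"
        "(snd y - snd x) mod int n = d"
      using n by (auto simp: layer_pairs_def)
    have "(snd x + d) mod int n = snd y mod int n"
      using p(6) by (metis add.commute diff_add_cancel mod_add_right_eq)
    also have "\<dots> = snd y"
      using X p(2) by (auto simp: mem_grp_iff)
    finally have "y = (k, (snd x + d) mod int n)"
      using p(5) by (simp add: prod_eq_iff)
    then show "p \<in> ?f ` {x\<in>layer X k. (k, (snd x + d) mod int n) \<in> X}"
      using p by (auto simp: layer_def)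
  next
    fix p assume "p \<in> ?f ` {x\<in>layer X k. (k, (snd x + d) mod int n) \<in> X}"
    then show "p \<in> layer_pairs n X (int n * k, d)"
      using d by (auto simp: layer_pairs_def layer_def mod_diff_left_eq)
  qed
  moreover have "inj_on ?f {x\<in>layer X k. (k, (snd x + d) mod int n) \<in> X}"
    by (auto simp: inj_on_def)
  ultimately show ?thesis
    by (simp add: card_image)
qed

lemma level_set_card_layer_pairs_max:
  assumes n: "n \<ge> 1" and X: "finite X" "X \<subseteq> grp n" and s: "s \<ge> 1" "\<And>k. card (layer X k) \<le> s"
  shows "{g \<in> grp n. card (layer_pairs n X g) = s} =
    {(int n * k, d) | k d. card (layer X k) = s \<and> d \<in> layer_stab n X k}"
proof -
  have fin: "finite (layer X k)" for k
    using X(1) by (simp add: layer_def)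
  have count: "card (layer_pairs n X (int n * k, d)) = s \<longleftrightarrow> card (layer X k) = s \<and> d \<in> layer_stab n X k"
    if d: "0 \<le> d" "d < int n" for k d
  proof -
    let ?S = "{x\<in>layer X k. (k, (snd x + d) mod int n) \<in> X}"
    have "card ?S \<le> card (layer X k)"
      using fin by (intro card_mono) auto
    then have "card ?S = s \<longleftrightarrow> card (layer X k) = s \<and> ?S = layer X k"
      using s(2)[of k] fin card_subset_eq[of "layer X k" ?S] by (metis (no_types, lifting) le_antisym mem_Collect_eq subsetI)
    also have "?S = layer X k \<longleftrightarrow> d \<in> layer_stab n X k"
      using d by (auto simp: layer_stab_def)
    finally show ?thesis
      using card_layer_pairs[OF n X(2) d] by simp
  qed
  show ?thesis
  proof (intro set_eqI iffI)
    fix g assume g: "g \<in> {g \<in> grp n. card (layer_pairs n X g) = s}"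
    then have ne: "layer_pairs n X g \<noteq> {}"
      using s(1) by auto
    obtain y where "y \<in> X" "fst g = int n * fst y"
      using layer_pairs_nonempty_imp[OF ne] by blast
    then have gy: "(int n * fst y, snd g) = g"
      by (simp add: prod_eq_iff)
    have d: "0 \<le> snd g" "snd g < int n"
      using g by (auto simp: mem_grp_iff)
    then have "card (layer X (fst y)) = s" "snd g \<in> layer_stab n X (fst y)"
      using g count[OF d, of "fst y"] gy by simp_all
    then have "(int n * fst y, snd g) \<in> {(int n * k, d) | k d. card (layer X k) = s \<and> d \<in> layer_stab n X k}"
      by blast
    then show "g \<in> {(int n * k, d) | k d. card (layer X k) = s \<and> d \<in> layer_stab n X k}"
      by (simp only: gy)
  next
    fix g assume "g \<in> {(int n * k, d) | k d. card (layer X k) = s \<and> d \<in> layer_stab n X k}"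
    then obtain k d where "g = (int n * k, d)" "card (layer X k) = s" "d \<in> layer_stab n X k"
      by blast
    then show "g \<in> {g \<in> grp n. card (layer_pairs n X g) = s}"
      using count by (auto simp: layer_stab_def mem_grp_iff)
  qed
qed

lemma level_set_card_layer_pairs_subgroups:
  assumes n: "n \<ge> 1" and R: "\<And>k. k \<in> K \<Longrightarrow> zn_subgroup n (R k)" and v: "v \<ge> 1"
  shows "{g \<in> grp n. card (layer_pairs n {(int n * k, e) | k e. k \<in> K \<and> e \<in> R k} g) = v} =
    {(int n * (int n * k), d) | k d. k \<in> K \<and> card (R k) = v \<and> d \<in> R k}"
proof -
  define X where "X = {(int n * k, e) | k e. k \<in> K \<and> e \<in> R k}"
  have X: "X \<subseteq> grp n"
    using zn_subgroup_bounds[OF R] by (auto simp: X_def mem_grp_iff)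
  have layer: "{x\<in>layer X (int n * k). (int n * k, (snd x + d) mod int n) \<in> X} =
      (\<lambda>e. (int n * k, e)) ` {e\<in>R k. (e + d) mod int n \<in> R k}" if "k \<in> K" for k d
    using n that by (auto simp: X_def layer_def image_iff)
  have layer_out: "layer X (int n * k) = {}" if "k \<notin> K" for k
    using n that by (auto simp: X_def layer_def)
  have count: "card (layer_pairs n X (int n * (int n * k), d)) = (if k \<in> K \<and> d \<in> R k then card (R k) else 0)"
    if d: "0 \<le> d" "d < int n" for k d
  proof (cases "k \<in> K")
    case True
    then show ?thesis
      using card_layer_pairs[OF n X d] layer card_zn_subgroup_shift[OF n R d]
      by (simp add: card_image inj_on_def)
  next
    case False
    then show ?thesis
      using card_layer_pairs[OF n X d] layer_out by simp
  qed
  show ?thesis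
    unfolding X_def[symmetric]
  proof (intro set_eqI iffI)
    fix g assume g: "g \<in> {g \<in> grp n. card (layer_pairs n X g) = v}"
    then have ne: "layer_pairs n X g \<noteq> {}"
      using v by auto
    obtain y where "y \<in> X" "fst g = int n * fst y"
      using layer_pairs_nonempty_imp[OF ne] by blast
    then obtain k where gk: "(int n * (int n * k), snd g) = g"
      using n by (auto simp: X_def prod_eq_iff)
    have d: "0 \<le> snd g" "snd g < int n"
      using g by (auto simp: mem_grp_iff)
    then have "(if k \<in> K \<and> snd g \<in> R k then card (R k) else 0) = v"
      using g count[OF d, of k] gk by simp
    then have "k \<in> K" "snd g \<in> R k" "card (R k) = v"
      using v by (auto split: if_splits)
    then have "(int n * (int n * k), snd g) \<in> {(int n * (int n * k), d) | k d. k \<in> K \<and> card (R k) = v \<and> d \<in> R k}"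
      by blast
    then show "g \<in> {(int n * (int n * k), d) | k d. k \<in> K \<and> card (R k) = v \<and> d \<in> R k}"
      by (simp only: gk)
  next
    fix g assume "g \<in> {(int n * (int n * k), d) | k d. k \<in> K \<and> card (R k) = v \<and> d \<in> R k}"
    then obtain k d where "g = (int n * (int n * k), d)" "k \<in> K" "card (R k) = v" "d \<in> R k"
      by blast
    moreover have "0 \<le> d" "d < int n"
      using zn_subgroup_bounds[OF R] \<open>k \<in> K\<close> \<open>d \<in> R k\<close> by auto
    ultimately show "g \<in> {g \<in> grp n. card (layer_pairs n X g) = v}"
      using count by (simp add: mem_grp_iff)
  qed
qed


section \<open>Subgroups generated inside \<open>\<int>\<close>\<close>

lemma lprod_in_prod_set: "set xs \<subseteq> Y \<Longrightarrow> lprod n xs \<in> prod_set n Y (length xs)"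
  by (auto simp: prod_set_def)

lemma subgrp_UN_prod_set:
  assumes n: "n \<ge> 1" and Y: "Y \<subseteq> grp n" "ginv n ` Y \<subseteq> Y"
  shows "subgrp n (\<Union>k. prod_set n Y k)"
  unfolding subgrp_def
proof (intro conjI ballI)
  show "(\<Union>k. prod_set n Y k) \<subseteq> grp n"
    using n by (auto simp: prod_set_def lprod_in_grp)
  have "{xs. set xs \<subseteq> Y \<and> length xs = 0} = {[]}"
    by auto
  then have "prod_set n Y 0 = {gone}"
    by (simp add: prod_set_def lprod_Nil)
  then show "gone \<in> (\<Union>k. prod_set n Y k)"
    by blast
  fix a b assume "a \<in> (\<Union>k. prod_set n Y k)" "b \<in> (\<Union>k. prod_set n Y k)"
  then obtain xs ys where xs: "set xs \<subseteq> Y" "a = lprod n xs" and ys: "set ys \<subseteq> Y" "b = lprod n ys"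
    by (auto simp: prod_set_def)
  have "gmul n a b \<in> prod_set n Y (length (xs @ ys))"
    using xs ys lprod_in_prod_set[of "xs @ ys" Y n] by (simp add: lprod_append)
  then show "gmul n a b \<in> (\<Union>k. prod_set n Y k)"
    by blast
  have "set (map (ginv n) xs) \<subseteq> Y"
    using xs Y(2) by auto
  then have "ginv n a \<in> prod_set n Y (length (map (ginv n) xs))"
    using xs lprod_in_prod_set[of "map (ginv n) xs" Y n] by (simp add: lprod_map_ginv)
  then show "ginv n a \<in> (\<Union>k. prod_set n Y k)"
    by blast
qed

lemma prod_set_subset_Zpart: "Y \<subseteq> Zpart \<Longrightarrow> prod_set n Y k \<subseteq> Zpart"
proof
  fix g assume "Y \<subseteq> Zpart" "g \<in> prod_set n Y k"
  then obtain xs where "set xs \<subseteq> Zpart" "g = lprod n xs"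
    by (auto simp: prod_set_def)
  moreover have "sum_list (map snd xs) = 0" if "set xs \<subseteq> Zpart" for xs :: "(int \<times> int) list"
    using that by (induction xs) (auto simp: Zpart_def)
  ultimately show "g \<in> Zpart"
    by (simp add: lprod_def Zpart_def)
qed

lemma subset_prod_set_1: "Y \<subseteq> grp n \<Longrightarrow> Y \<subseteq> prod_set n Y 1"
  unfolding prod_set_def by (force simp: lprod_singleton intro: image_eqI[where x = "[_]"])

context schur_ring_ZZn
begin

lemma ex_S_subgroup_Zpart_superset:
  assumes Y: "finite Y" "S_subset D Y" "Y \<subseteq> Zpart"
  shows "\<exists>W. S_subgroup n D W \<and> W \<subseteq> Zpart \<and> Y \<subseteq> W"
proof -
  define Y' where "Y' = Y \<union> ginv n ` Y"
  have Y': "finite Y'" "S_subset D Y'"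
    using Y S_subset_Union[of "{Y, ginv n ` Y}"] S_subset_ginv_image by (auto simp: Y'_def)
  have "Y' \<subseteq> Zpart"
    using Y(3) by (auto simp: Y'_def Zpart_def ginv_def)
  have "ginv n ` Y' \<subseteq> Y'"
    using ginv_ginv S_subset_subset_grp[OF Y(2)] by (force simp: Y'_def)
  define W where "W = (\<Union>k. prod_set n Y' k)"
  have "S_subgroup n D W"
    unfolding S_subgroup_def W_def
    using subgrp_UN_prod_set[OF n_pos S_subset_subset_grp[OF Y'(2)] \<open>ginv n ` Y' \<subseteq> Y'\<close>]
      S_subset_Union S_subset_prod_set[OF Y'] by blast
  moreover have "W \<subseteq> Zpart"
    using prod_set_subset_Zpart[OF \<open>Y' \<subseteq> Zpart\<close>] by (auto simp: W_def)
  moreover have "Y \<subseteq> W"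
    using subset_prod_set_1[OF S_subset_subset_grp[OF Y'(2)]] by (auto simp: W_def Y'_def)
  ultimately show ?thesis by blast
qed

text \<open>If one coset \<open>x\<^sub>0 Q\<close> lies in the class \<open>C\<close>, all do: the number of \<open>u \<in> Q\<close> with \<open>u\<^sup>-\<^sup>1 g \<in> C\<close> is a
  structure constant, hence the same for all \<open>g \<in> C\<close>.\<close>

lemma class_eq_UN_cosets:
  assumes C: "C \<in> D" and Q: "finite Q" "S_subgroup n D Q" and x0: "x0 \<in> C" "gmul n x0 ` Q \<subseteq> C"
  shows "C = (\<Union>x\<in>C. gmul n x ` Q)"
proof -
  have QS: "S_subset D Q" and Qg: "Q \<subseteq> grp n" and Q1: "gone \<in> Q" and Qinv: "\<And>u. u \<in> Q \<Longrightarrow> ginv n u \<in> Q"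
    using Q(2) by (auto simp: S_subgroup_def subgrp_def)
  have Cg: "C \<subseteq> grp n" by (rule class_subset_grp[OF C])
  have count: "pair_count n Q C g = card {u\<in>Q. gmul n (ginv n u) g \<in> C}" if "g \<in> C" for g
    using pair_count_eq_card_ginv[OF n_pos _ Cg] Cg that by blast
  have "{u\<in>Q. gmul n (ginv n u) x0 \<in> C} = Q"
    using x0(2) Qinv by (auto simp: gmul_commute)
  moreover have "pair_count n Q C g = pair_count n Q C x0" if "g \<in> C" for g
    using class_fun_pair_count[OF Q(1) QS finite_class[OF C] S_subset_class[OF C]] C that x0(1)
    unfolding class_fun_def by blast
  ultimately have "{u\<in>Q. gmul n (ginv n u) g \<in> C} = Q" if "g \<in> C" for g
    using count that x0(1) Q(1) by (metis (no_types, lifting) card_subset_eq mem_Collect_eq subsetI)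
  then have closed: "gmul n g u \<in> C" if "g \<in> C" "u \<in> Q" for g u
    using that Qinv ginv_ginv Qg by (metis (no_types, lifting) gmul_commute mem_Collect_eq subsetD)
  have "x \<in> gmul n x ` Q" if "x \<in> C" for x
    using Q1 gmul_gone_right Cg that by (metis image_eqI subsetD)
  then show ?thesis
    using closed by blast
qed

lemma S_subgroup_product_Znpart:
  assumes A: "finite A" "A \<noteq> {}" and R: "zn_subgroup n R" and S: "S_subset D (A \<times> R)"
  shows "S_subgroup n D ({0} \<times> R)"
proof -
  define Z where "Z = A \<times> R"
  have Z: "finite Z" "S_subset D Z" "S_subset D (ginv n ` Z)" "finite (ginv n ` Z)"
    using A zn_subgroup_finite[OF R] S S_subset_ginv_image by (simp_all add: Z_def)
  have eq: "{0} \<times> R = Znpart n \<inter> {g \<in> grp n. pair_count n Z (ginv n ` Z) g \<noteq> 0}"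
  proof (intro set_eqI iffI)
    fix g :: "int \<times> int" assume "g \<in> {0} \<times> R"
    then obtain d where g: "g = (0, d)" "d \<in> R" by blast
    obtain a where "a \<in> A" using A(2) by blast
    then have "(a, d) \<in> Z" "(a, 0) \<in> Z"
      using g(2) R by (auto simp: Z_def zn_subgroup_def)
    moreover have "gmul n (a, d) (ginv n (a, 0)) = g"
      using g zn_subgroup_bounds[OF R g(2)] by (simp add: gmul_def ginv_def)
    ultimately have "((a, d), ginv n (a, 0)) \<in> {(x, y). x \<in> Z \<and> y \<in> ginv n ` Z \<and> gmul n x y = g}"
      by blast
    moreover have "finite {(x, y). x \<in> Z \<and> y \<in> ginv n ` Z \<and> gmul n x y = g}"
      by (rule finite_subset[of _ "Z \<times> ginv n ` Z"]) (use Z in auto)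
    ultimately have "card {(x, y). x \<in> Z \<and> y \<in> ginv n ` Z \<and> gmul n x y = g} > 0"
      unfolding card_gt_0_iff by blast
    then have "pair_count n Z (ginv n ` Z) g \<noteq> 0"
      by (simp add: pair_count_def)
    then show "g \<in> Znpart n \<inter> {g \<in> grp n. pair_count n Z (ginv n ` Z) g \<noteq> 0}"
      using g zn_subgroup_bounds[OF R g(2)] by (auto simp: Znpart_def mem_grp_iff)
  next
    fix g :: "int \<times> int" assume g: "g \<in> Znpart n \<inter> {g \<in> grp n. pair_count n Z (ginv n ` Z) g \<noteq> 0}"
    then have "card {(x, y). x \<in> Z \<and> y \<in> ginv n ` Z \<and> gmul n x y = g} \<noteq> 0"
      unfolding pair_count_def by blast
    then have "{(x, y). x \<in> Z \<and> y \<in> ginv n ` Z \<and> gmul n x y = g} \<noteq> {}"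
      by (intro notI) simp
    then obtain z1 z2 where z: "z1 \<in> Z" "z2 \<in> Z" "gmul n z1 (ginv n z2) = g"
      by blast
    then have "snd g = (snd z1 - snd z2) mod int n"
      by (auto simp: gmul_def ginv_def mod_add_right_eq)
    then have "snd g \<in> R"
      using z zn_subgroup_diff[OF n_pos R] by (auto simp: Z_def)
    moreover have "fst g = 0"
      using g by (auto simp: Znpart_def)
    ultimately show "g \<in> {0} \<times> R"
      by (simp add: mem_Times_iff)
  qed
  have "S_subset D ({0} \<times> R)"
    unfolding eq by (rule S_subset_Int[OF S_subset_Znpart S_subset_level_set[OF class_fun_pair_count[OF Z(1,2,4,3)]]])
  moreover have "subgrp n ({0} \<times> R)"
    using R zn_subgroup_uminus[OF n_pos R] zn_subgroup_bounds[OF R]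
    by (auto simp: subgrp_def zn_subgroup_def mem_grp_iff gone_def gmul_def ginv_def)
  ultimately show ?thesis
    by (simp add: S_subgroup_def)
qed

end


section \<open>Classes outside \<open>K \<times> \<int>\<^sub>n\<close>\<close>

context schur_ring_ZZn
begin

lemma class_eq_UN_cosets_Znpart:
  assumes max: "\<And>W. S_subgroup n D W \<Longrightarrow> W \<subseteq> Zpart \<Longrightarrow> \<forall>w\<in>W. int m dvd fst w"
    and m: "n dvd m" and C: "C \<in> D" and out: "\<And>x. x \<in> C \<Longrightarrow> \<not> int (m div n) dvd fst x"
  shows "\<exists>L. S_subgroup n D L \<and> L \<subseteq> Znpart n \<and> L \<noteq> {gone} \<and> C = (\<Union>x\<in>C. gmul n x ` L)"
proof -
  have finC: "finite C" and Cg: "C \<subseteq> grp n"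
    using C by (simp_all add: finite_class class_subset_grp)
  define s where "s = Max ((\<lambda>k. card (layer C k)) ` fst ` C)"
  define K where "K = {k. card (layer C k) = s}"
  define R where "R = layer_stab n C"
  have fin_layer: "finite (layer C k)" for k
    using finC by (simp add: layer_def)
  have s_max: "card (layer C k) \<le> s" for k
  proof (cases "k \<in> fst ` C")
    case True
    then show ?thesis using finC by (auto simp: s_def)
  next
    case False
    then have "layer C k = {}" by (force simp: layer_def)
    then show ?thesis by simp
  qed
  have "s \<in> (\<lambda>k. card (layer C k)) ` fst ` C"
    unfolding s_def using finC class_nonempty[OF C] by (intro Max_in) auto
  then obtain k0 where "k0 \<in> fst ` C" "k0 \<in> K"
    by (auto simp: K_def)
  then have "s \<ge> 1"
    using fin_layer by (auto simp: K_def layer_def Suc_le_eq card_gt_0_iff)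
  have K_layer: "layer C k \<noteq> {}" if "k \<in> K" for k
    using that \<open>s \<ge> 1\<close> by (auto simp: K_def)
  have R: "zn_subgroup n (R k)" for k
    unfolding R_def using n_pos Cg by (rule zn_subgroup_layer_stab)
  define Y where "Y = {(int n * k, d) | k d. k \<in> K \<and> d \<in> R k}"
  have Y_eq: "{g \<in> grp n. card (layer_pairs n C g) = s} = Y"
    unfolding Y_def K_def R_def using level_set_card_layer_pairs_max[OF n_pos finC Cg \<open>s \<ge> 1\<close> s_max] by simp
  have "Y \<subseteq> (\<lambda>(k, d). (int n * k, d)) ` (fst ` C \<times> {0..<int n})"
    using K_layer zn_subgroup_bounds[OF R] by (force simp: Y_def layer_def)
  then have finY: "finite Y"
    by (rule finite_subset) (use finC in simp)
  have SY: "S_subset D Y"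
    unfolding Y_eq[symmetric] using finC S_subset_class[OF C] \<open>s \<ge> 1\<close> by (rule S_subset_card_layer_pairs)
  show ?thesis
  proof (cases "\<forall>k\<in>K. R k = {0}")
    case True
    then have "Y \<subseteq> Zpart"
      by (auto simp: Y_def Zpart_def)
    then obtain W where W: "S_subgroup n D W" "W \<subseteq> Zpart" "Y \<subseteq> W"
      using ex_S_subgroup_Zpart_superset[OF finY SY] by blast
    have "(int n * k0, 0) \<in> Y"
      using \<open>k0 \<in> K\<close> R by (auto simp: Y_def zn_subgroup_def)
    then have "int m dvd int n * k0"
      using max[OF W(1,2)] W(3) by fastforce
    moreover have "int m = int n * int (m div n)"
      using m by (simp flip: of_nat_mult)
    ultimately have "int (m div n) dvd k0"
      using n_pos by simp
    then show ?thesis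
      using out \<open>k0 \<in> fst ` C\<close> by blast
  next
    case False
    then obtain ks where ks: "ks \<in> K" "R ks \<noteq> {0}" by blast
    define v where "v = card (R ks)"
    have "0 \<in> R ks" using R by (simp add: zn_subgroup_def)
    then have "v \<ge> 1"
      using zn_subgroup_finite[OF R] by (auto simp: v_def Suc_le_eq card_gt_0_iff)
    define A where "A = {int n * (int n * k) | k. k \<in> K \<and> card (R k) = v}"
    have R_v: "R k = R ks" if "card (R k) = v" for k
      using zn_subgroup_eq_if_card_eq[OF n_pos R R] that by (simp add: v_def)
    have "{g \<in> grp n. card (layer_pairs n Y g) = v} = A \<times> R ks"
      unfolding Y_def level_set_card_layer_pairs_subgroups[OF n_pos R \<open>v \<ge> 1\<close>]
    proof (intro set_eqI iffI)
      fix g assume "g \<in> {(int n * (int n * k), d) | k d. k \<in> K \<and> card (R k) = v \<and> d \<in> R k}"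
      then show "g \<in> A \<times> R ks"
        unfolding A_def using R_v by blast
    next
      fix g assume "g \<in> A \<times> R ks"
      then show "g \<in> {(int n * (int n * k), d) | k d. k \<in> K \<and> card (R k) = v \<and> d \<in> R k}"
        unfolding A_def using R_v by fastforce
    qed
    moreover have "A \<subseteq> (\<lambda>k. int n * (int n * k)) ` fst ` C"
      using K_layer by (force simp: A_def layer_def)
    then have "finite A"
      by (rule finite_subset) (use finC in simp)
    moreover have "A \<noteq> {}"
      using ks by (auto simp: A_def v_def)
    ultimately have Q: "S_subgroup n D ({0} \<times> R ks)"
      using S_subset_card_layer_pairs[OF finY SY \<open>v \<ge> 1\<close>] R by (metis S_subgroup_product_Znpart)
    obtain x0 where x0: "x0 \<in> layer C ks"
      using K_layer[OF ks(1)] by blast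
    have "gmul n x0 ` ({0} \<times> R ks) \<subseteq> C"
      using x0 by (auto simp: R_def layer_stab_def layer_def gmul_def)
    moreover have "finite ({0} \<times> R ks)" "x0 \<in> C"
      using zn_subgroup_finite[OF R] x0 by (simp_all add: layer_def)
    ultimately have "C = (\<Union>x\<in>C. gmul n x ` ({0} \<times> R ks))"
      using class_eq_UN_cosets[OF C _ Q] by blast
    moreover have "{0} \<times> R ks \<subseteq> Znpart n"
      using zn_subgroup_bounds[OF R] by (auto simp: Znpart_def)
    moreover have "{0} \<times> R ks \<noteq> {gone}"
      using ks(2) \<open>0 \<in> R ks\<close> by (auto simp: gone_def)
    ultimately show ?thesis
      using Q by blast
  qed
qed

end

theorem theorem3p2:
  fixes F :: "'f::field_char_0 itself"
    and n m :: nat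
    and D :: "(int \<times> int) set set"
    and H :: "(int \<times> int) set"
  assumes npos: "n \<ge> 1"
    and S: "schur_ring F n D"
    and H_Ssub: "S_subgroup n D H" and H_Z: "H \<subseteq> Zpart"
    and H_max: "\<forall>H'. S_subgroup n D H' \<and> H' \<subseteq> Zpart \<longrightarrow> H' \<subseteq> H"
    and H_index: "H = (\<lambda>k. (int m * k, 0)) ` UNIV"
    and dvd: "n dvd m"
  shows "\<forall>C\<in>D. C \<subseteq> grp n - {(x, y). x \<in> (\<lambda>k. int (m div n) * k) ` UNIV \<and> y \<in> {0..<int n}} \<longrightarrow>
           (\<exists>L. S_subgroup n D L \<and> L \<subseteq> Znpart n \<and> L \<noteq> {gone} \<and>
                (\<exists>X. C = (\<Union>x\<in>X. gmul n x ` L)))"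
proof (intro ballI impI)
  fix C assume C: "C \<in> D"
    and out: "C \<subseteq> grp n - {(x, y). x \<in> (\<lambda>k. int (m div n) * k) ` UNIV \<and> y \<in> {0..<int n}}"
  interpret schur_ring_ZZn F n D
    using npos S by unfold_locales
  have max: "\<forall>w\<in>W. int m dvd fst w" if "S_subgroup n D W" "W \<subseteq> Zpart" for W
    using H_max that unfolding H_index by fastforce
  have "\<not> int (m div n) dvd fst x" if "x \<in> C" for x
  proof
    assume "int (m div n) dvd fst x"
    then obtain k where "fst x = int (m div n) * k"
      by (elim dvdE)
    moreover have "x \<in> grp n"
      using out that by blast
    ultimately have "x \<in> {(x, y). x \<in> (\<lambda>k. int (m div n) * k) ` UNIV \<and> y \<in> {0..<int n}}"
      by (cases x) (auto simp: mem_grp_iff)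
    then show False
      using out that by blast
  qed
  then obtain L where "S_subgroup n D L" "L \<subseteq> Znpart n" "L \<noteq> {gone}" "C = (\<Union>x\<in>C. gmul n x ` L)"
    using class_eq_UN_cosets_Znpart[OF max dvd C] by blast
  then show "\<exists>L. S_subgroup n D L \<and> L \<subseteq> Znpart n \<and> L \<noteq> {gone} \<and> (\<exists>X. C = (\<Union>x\<in>X. gmul n x ` L))"
    by blast
qed

end
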